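(* Let $\mathfrak{P}=(\rho_{t_0},\mathcal{E}_{t_1\leftarrow t_0},\dots,\mathcal{E}_{t_n\leftarrow t_{n-1}})$ be a multi-time quantum process with $\mathcal{H}_{t_k}=\mathbb{C}^d$ for all $k$, and let $\overrightarrow{\Upsilon},\overleftarrow{\Upsilon},\overleftrightarrow{\Upsilon},\Upsilon^{\rm MH},\overleftrightarrow{\Upsilon}^{\rm MH}$ be its right, left, doubled KD temporal states and its left/right and doubled MH temporal states. Then: (1) $\overrightarrow{\Upsilon}=\operatorname{Tr}_L\overleftrightarrow{\Upsilon}$, $\overleftarrow{\Upsilon}=\operatorname{Tr}_R\overleftrightarrow{\Upsilon}$, and $\overrightarrow{\Upsilon}=\overleftarrow{\Upsilon}^\dagger$. For every $k$, $\rho_{t_k}=\operatorname{Tr}_{t_n,\dots,\widehat{t_k},\dots,t_0}\overrightarrow{\Upsilon}=\operatorname{Tr}_{t_n,\dots,\widehat{t_k},\dots,t_0}\overleftarrow{\Upsilon}$, where $\rho_{t_k}=\mathcal{E}_{t_k\leftarrow t_{k-1}}\circ\cdots\circ\mathcal{E}_{t_1\leftarrow t_0}(\rho_{t_0})$ and the partial trace is over all time steps except $t_k$. Moreover the quantum Kolmogorov consistency condition holds: for any $0=i_0<i_1<\dots<i_k\le n$, the partial trace of $\overrightarrow{\Upsilon}$ (resp. $\overleftarrow{\Upsilon}$) over the time steps not in $\{t_{i_0},\dots,t_{i_k}\}$, and the partial trace of $\overleftrightarrow{\Upsilon}$ over both the $L$ and $R$ factors of those time steps, equal the corresponding KD temporal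 states of the sub-process $(\rho_{t_0},\mathcal{E}'_{t_{i_1}\leftarrow t_{i_0}},\dots,\mathcal{E}'_{t_{i_k}\leftarrow t_{i_{k-1}}})$ with $\mathcal{E}'_{t_{i_j}\leftarrow t_{i_{j-1}}}=\mathcal{E}_{t_{i_j}\leftarrow t_{i_j-1}}\circ\cdots\circ\mathcal{E}_{t_{i_{j-1}+1}\leftarrow t_{i_{j-1}}}$. (2) $\Upsilon^{\rm MH}=\tfrac12(\overleftarrow{\Upsilon}+\overleftarrow{\Upsilon}^\dagger)=\tfrac12(\overrightarrow{\Upsilon}+\overrightarrow{\Upsilon}^\dagger)$ and $\overleftrightarrow{\Upsilon}^{\rm MH}=\tfrac12(\overleftrightarrow{\Upsilon}+\overleftrightarrow{\Upsilon}^\dagger)$; in particular $\rho_{t_k}$ is also the partial trace of $\Upsilon^{\rm MH}$ over all time steps except $t_k$. (3) (Temporal Born rule) For any complete families of orthogonal projectors $\{\Pi^{t_k}_{a}\}$, $\{\Pi^{t_k}_{b}\}$ at each time step: $\overrightarrow{Q}_{\rm KD}(b_n,\dots,b_0)=\operatorname{Tr}[(\Pi_{b_n}\otimes\cdots\otimes\Pi_{b_0})\overrightarrow{\Upsilon}]$; $\overleftarrow{Q}_{\rm KD}(b_n,\dots,b_0)=\operatorname{Tr}[(\Pi_{b_n}\otimes\cdots\otimes\Pi_{b_0})\overleftarrow{\Upsilon}]$; $\overleftrightarrow{Q}_{\rm KD}(a_n,\dots,a_0;b_n,\dots,b_0)=\operatorname{Tr}[(\Pi_{a_n}\otimes\cdots\otimes\Pi_{a_0})\otimes(\Pi_{b_n}\otimes\cdots\otimes\Pi_{b_0})\overleftrightarrow{\Upsilon}]$;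 $Q_{\rm MH}(b_n,\dots,b_0)=\operatorname{Tr}[(\Pi_{b_n}\otimes\cdots\otimes\Pi_{b_0})\Upsilon^{\rm MH}]$; $\overleftrightarrow{Q}_{\rm MH}(a;b)=\operatorname{Tr}[(\Pi_{a_n}\otimes\cdots\otimes\Pi_{a_0})\otimes(\Pi_{b_n}\otimes\cdots\otimes\Pi_{b_0})\overleftrightarrow{\Upsilon}^{\rm MH}]$; and $Q_{\rm LvN}(a_n,\dots,a_0)=\operatorname{Tr}[(\Pi_{a_n}\otimes\cdots\otimes\Pi_{a_0})\otimes(\Pi_{a_n}\otimes\cdots\otimes\Pi_{a_0})\overleftrightarrow{\Upsilon}]=\operatorname{Tr}[(\Pi_{a_n}\otimes\cdots\otimes\Pi_{a_0})\otimes(\Pi_{a_n}\otimes\cdots\otimes\Pi_{a_0})\overleftrightarrow{\Upsilon}^{\rm MH}]$.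
   Context: A multi-time quantum process consists of a density operator $\rho_{t_0}$ on $\mathbb{C}^d$ and CPTP maps $\mathcal{E}_{t_j\leftarrow t_{j-1}}$ on $\mathbf{B}(\mathbb{C}^d)$, extended linearly to all operators. Given complete families of orthogonal projectors, the right, left and doubled temporal KD distributions are $\overrightarrow{Q}_{\rm KD}(b_n,\dots,b_0)=\operatorname{Tr}[\mathcal{E}_{t_n\leftarrow t_{n-1}}(\cdots\mathcal{E}_{t_1\leftarrow t_0}(\rho_{t_0}\Pi^{t_0}_{b_0})\Pi^{t_1}_{b_1}\cdots)\Pi^{t_n}_{b_n}]$, $\overleftarrow{Q}_{\rm KD}(a_n,\dots,a_0)=\operatorname{Tr}[\Pi^{t_n}_{a_n}\mathcal{E}_{t_n\leftarrow t_{n-1}}(\cdots\Pi^{t_1}_{a_1}\mathcal{E}_{t_1\leftarrow t_0}(\Pi^{t_0}_{a_0}\rho_{t_0})\cdots)]$, $\overleftrightarrow{Q}_{\rm KD}(a_n,\dots,a_0;b_n,\dots,b_0)=\operatorname{Tr}[\Pi^{t_n}_{a_n}\mathcal{E}_{t_n\leftarrow t_{n-1}}(\cdots\Pi^{t_1}_{a_1}\mathcal{E}_{t_1\leftarrow t_0}(\Pi^{t_0}_{a_0}\rho_{t_0}\Pi^{t_0}_{b_0})\Pi^{t_1}_{b_1}\cdots)\Pi^{t_n}_{b_n}]$. The Margenau–Hill (MH) distributions are $Q_{\rm MH}=\operatorname{Re}\overrightarrow{Q}_{\rm KD}$ and $\overleftrightarrow{Q}_{\rm MH}=\operatorname{Re}\overleftrightarrow{Q}_{\rm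 KD}$; the Lüders–von Neumann distribution is $Q_{\rm LvN}(a_n,\dots,a_0)=\overleftrightarrow{Q}_{\rm KD}(a_n,\dots,a_0;a_n,\dots,a_0)$ (same projectors on both sides). Generalized Pauli operators: Hermitian $\sigma_0=\mathbb{I},\sigma_1,\dots,\sigma_{d^2-1}$ on $\mathbb{C}^d$ with $\operatorname{Tr}\sigma_j=0$ ($j\ge1$), $\operatorname{Tr}(\sigma_\mu\sigma_\nu)=d\,\delta_{\mu\nu}$. For each $\sigma_\mu$ use its spectral projectors as measurement, with outcomes its eigenvalues. Correlators: $\overrightarrow{T}^{\mu_n,\dots,\mu_0}=\sum a_n\cdots a_0\,\overrightarrow{Q}_{\rm KD}(a_n,\dots,a_0\mid\sigma_{\mu_n},\dots,\sigma_{\mu_0})$, $\overleftarrow{T}$ analogously from $\overleftarrow{Q}_{\rm KD}$, and $\overleftrightarrow{T}^{\mu_n,\dots,\mu_0;\nu_n,\dots,\nu_0}=\sum a_n\cdots a_0b_n\cdots b_0\,\overleftrightarrow{Q}_{\rm KD}(a;b\mid\sigma_{\mu_n},\dots,\sigma_{\mu_0};\sigma_{\nu_n},\dots,\sigma_{\nu_0})$ (ket side measured with the $\sigma_{\mu}$'s, bra side with the $\sigma_\nu$'s). The KD temporal states on $\mathcal{H}_{t_n}\otimes\cdots\otimes\mathcal{H}_{t_0}$ are $\overrightarrow{\Upsilon}=d^{-(n+1)}\sum_{\mu}\overrightarrow{T}^{\mu_n,\dots,\mu_0}\sigma_{\mu_n}\otimes\cdots\otimes\sigma_{\mu_0}$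 and $\overleftarrow{\Upsilon}$ likewise with $\overleftarrow{T}$; the doubled KD temporal state on $L\otimes R$, with $L=R=\mathcal{H}_{t_n}\otimes\cdots\otimes\mathcal{H}_{t_0}$, is $\overleftrightarrow{\Upsilon}=d^{-2(n+1)}\sum_{\mu,\nu}\overleftrightarrow{T}^{\mu_n,\dots,\mu_0;\nu_n,\dots,\nu_0}(\bigotimes_i\sigma_{\mu_i})\otimes(\bigotimes_j\sigma_{\nu_j})$. The MH temporal states $\Upsilon^{\rm MH}$ and $\overleftrightarrow{\Upsilon}^{\rm MH}$ are defined by the same formulas with the correlators replaced by $\operatorname{Re}\overrightarrow{T}$ and $\operatorname{Re}\overleftrightarrow{T}$ respectively. *)

theory Defs
  imports "HOL-Analysis.Analysis"
begin

type_synonym 'd sop = "'d \<Rightarrow> 'd \<Rightarrow> complex"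
type_synonym 'd mop = "'d list \<Rightarrow> 'd list \<Rightarrow> complex"
  (* operator on (\<complex>^d)^\<otimes>m; index list xs, xs!k = index of time step t_k *)
type_synonym 'd dop = "'d list \<times> 'd list \<Rightarrow> 'd list \<times> 'd list \<Rightarrow> complex"
  (* operator on L \<otimes> R, L = R = (\<complex>^d)^\<otimes>m *)

definition idm :: "'d sop" where
  "idm i j = (if i = j then 1 else 0)"

definition mmul :: "('d::finite) sop \<Rightarrow> 'd sop \<Rightarrow> 'd sop" where
  "mmul A B i j = (\<Sum>k\<in>UNIV. A i k * B k j)"

definition mtr :: "('d::finite) sop \<Rightarrow> complex" where
  "mtr A = (\<Sum>i\<in>UNIV. A i i)"

definition mvec :: "('d::finite) sop \<Rightarrow> ('d \<Rightarrow> complex) \<Rightarrow> ('d \<Rightarrow> complex)" where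
  "mvec A v i = (\<Sum>j\<in>UNIV. A i j * v j)"

definition hermitian :: "'d sop \<Rightarrow> bool" where
  "hermitian A \<longleftrightarrow> (\<forall>i j. A i j = cnj (A j i))"

definition psd_on :: "'i set \<Rightarrow> ('i \<Rightarrow> 'i \<Rightarrow> complex) \<Rightarrow> bool" where
  "psd_on I A \<longleftrightarrow> (\<forall>v. Im (\<Sum>x\<in>I. \<Sum>y\<in>I. cnj (v x) * A x y * v y) = 0
                     \<and> Re (\<Sum>x\<in>I. \<Sum>y\<in>I. cnj (v x) * A x y * v y) \<ge> 0)"

definition density :: "('d::finite) sop \<Rightarrow> bool" where
  "density \<rho> \<longleftrightarrow> psd_on UNIV \<rho> \<and> mtr \<rho> = 1"

definition clinear_map :: "('d sop \<Rightarrow> 'd sop) \<Rightarrow> bool" where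
  "clinear_map E \<longleftrightarrow>
     (\<forall>A B. E (\<lambda>i j. A i j + B i j) = (\<lambda>i j. E A i j + E B i j)) \<and>
     (\<forall>c A. E (\<lambda>i j. c * A i j) = (\<lambda>i j. c * E A i j))"

text \<open>complete positivity: (id_m \<otimes> E) is positive for every ancilla dimension m\<close>
definition completely_positive :: "(('d::finite) sop \<Rightarrow> 'd sop) \<Rightarrow> bool" where
  "completely_positive E \<longleftrightarrow>
     (\<forall>(m::nat) (X :: nat \<times> 'd \<Rightarrow> nat \<times> 'd \<Rightarrow> complex).
        psd_on ({..<m} \<times> UNIV) X \<longrightarrow>
        psd_on ({..<m} \<times> UNIV) (\<lambda>(i,a) (j,b). E (\<lambda>a' b'. X (i,a') (j,b')) a b))"

definition trace_preserving :: "(('d::finite) sop \<Rightarrow> 'd sop) \<Rightarrow> bool" where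
  "trace_preserving E \<longleftrightarrow> (\<forall>A. mtr (E A) = mtr A)"

definition cptp :: "(('d::finite) sop \<Rightarrow> 'd sop) \<Rightarrow> bool" where
  "cptp E \<longleftrightarrow> clinear_map E \<and> completely_positive E \<and> trace_preserving E"

text \<open>A multi-time process (\<rho>_{t_0}, E_{t_1\<leftarrow>t_0}, ..., E_{t_n\<leftarrow>t_{n-1}}); E j = E_{t_j\<leftarrow>t_{j-1}}.\<close>
definition multi_time_process :: "nat \<Rightarrow> ('d::finite) sop \<Rightarrow> (nat \<Rightarrow> 'd sop \<Rightarrow> 'd sop) \<Rightarrow> bool" where
  "multi_time_process n \<rho> E \<longleftrightarrow> density \<rho> \<and> (\<forall>j\<in>{1..n}. cptp (E j))"

definition proj_family :: "'a set \<Rightarrow> ('a \<Rightarrow> ('d::finite) sop) \<Rightarrow> bool" where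
  "proj_family Out P \<longleftrightarrow> finite Out \<and>
     (\<forall>a\<in>Out. hermitian (P a) \<and> mmul (P a) (P a) = P a) \<and>
     (\<forall>a\<in>Out. \<forall>b\<in>Out. a \<noteq> b \<longrightarrow> mmul (P a) (P b) = (\<lambda>i j. 0)) \<and>
     (\<lambda>i j. \<Sum>a\<in>Out. P a i j) = idm"

fun sandwich_chain :: "('d::finite) sop \<Rightarrow> (nat \<Rightarrow> 'd sop \<Rightarrow> 'd sop) \<Rightarrow> (nat \<Rightarrow> 'd sop) \<Rightarrow> (nat \<Rightarrow> 'd sop)
                         \<Rightarrow> nat \<Rightarrow> 'd sop" where
  "sandwich_chain \<rho> E L R 0 = mmul (L 0) (mmul \<rho> (R 0))"
| "sandwich_chain \<rho> E L R (Suc k) =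
     mmul (L (Suc k)) (mmul (E (Suc k) (sandwich_chain \<rho> E L R k)) (R (Suc k)))"

text \<open>Projectors given as P k = \<Pi>^{t_k}_{b_k}.\<close>
definition QKD_right :: "('d::finite) sop \<Rightarrow> (nat \<Rightarrow> 'd sop \<Rightarrow> 'd sop) \<Rightarrow> nat \<Rightarrow> (nat \<Rightarrow> 'd sop) \<Rightarrow> complex" where
  "QKD_right \<rho> E n P = mtr (sandwich_chain \<rho> E (\<lambda>_. idm) P n)"

definition QKD_left :: "('d::finite) sop \<Rightarrow> (nat \<Rightarrow> 'd sop \<Rightarrow> 'd sop) \<Rightarrow> nat \<Rightarrow> (nat \<Rightarrow> 'd sop) \<Rightarrow> complex" where
  "QKD_left \<rho> E n P = mtr (sandwich_chain \<rho> E P (\<lambda>_. idm) n)"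

text \<open>PL = ket side projectors \<Pi>_{a_k}, PR = bra side projectors \<Pi>_{b_k}\<close>
definition QKD_doubled :: "('d::finite) sop \<Rightarrow> (nat \<Rightarrow> 'd sop \<Rightarrow> 'd sop) \<Rightarrow> nat \<Rightarrow> (nat \<Rightarrow> 'd sop)
                            \<Rightarrow> (nat \<Rightarrow> 'd sop) \<Rightarrow> complex" where
  "QKD_doubled \<rho> E n PL PR = mtr (sandwich_chain \<rho> E PL PR n)"

definition QMH :: "('d::finite) sop \<Rightarrow> (nat \<Rightarrow> 'd sop \<Rightarrow> 'd sop) \<Rightarrow> nat \<Rightarrow> (nat \<Rightarrow> 'd sop) \<Rightarrow> real" where
  "QMH \<rho> E n P = Re (QKD_right \<rho> E n P)"

definition QMH_doubled :: "('d::finite) sop \<Rightarrow> (nat \<Rightarrow> 'd sop \<Rightarrow> 'd sop) \<Rightarrow> nat \<Rightarrow> (nat \<Rightarrow> 'd sop)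
                            \<Rightarrow> (nat \<Rightarrow> 'd sop) \<Rightarrow> real" where
  "QMH_doubled \<rho> E n PL PR = Re (QKD_doubled \<rho> E n PL PR)"

definition QLvN :: "('d::finite) sop \<Rightarrow> (nat \<Rightarrow> 'd sop \<Rightarrow> 'd sop) \<Rightarrow> nat \<Rightarrow> (nat \<Rightarrow> 'd sop) \<Rightarrow> complex" where
  "QLvN \<rho> E n P = QKD_doubled \<rho> E n P P"

definition eigenvalues :: "('d::finite) sop \<Rightarrow> complex set" where
  "eigenvalues A = {e. \<exists>v. v \<noteq> (\<lambda>_. 0) \<and> mvec A v = (\<lambda>i. e * v i)}"

definition spectral_projector :: "('d::finite) sop \<Rightarrow> complex \<Rightarrow> 'd sop" where
  "spectral_projector A e = (THE P. hermitian P \<and> mmul P P = P \<and>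
        (\<forall>v. mvec P v = v \<longleftrightarrow> mvec A v = (\<lambda>i. e * v i)))"

definition gen_pauli :: "(nat \<Rightarrow> ('d::finite) sop) \<Rightarrow> bool" where
  "gen_pauli \<sigma> \<longleftrightarrow> \<sigma> 0 = idm \<and>
     (\<forall>\<mu> < CARD('d)^2. hermitian (\<sigma> \<mu>)) \<and>
     (\<forall>j\<in>{1..<CARD('d)^2}. mtr (\<sigma> j) = 0) \<and>
     (\<forall>\<mu> < CARD('d)^2. \<forall>\<nu> < CARD('d)^2.
        mtr (mmul (\<sigma> \<mu>) (\<sigma> \<nu>)) = (if \<mu> = \<nu> then of_nat CARD('d) else 0))"

definition pauli_idx :: "nat \<Rightarrow> nat \<Rightarrow> nat list set" where
  "pauli_idx d m = {\<mu>s. length \<mu>s = m \<and> (\<forall>k<m. \<mu>s!k < d^2)}"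

definition outcome_lists :: "(nat \<Rightarrow> 'a set) \<Rightarrow> nat \<Rightarrow> 'a list set" where
  "outcome_lists Out m = {as. length as = m \<and> (\<forall>k<m. as!k \<in> Out k)}"

definition corr_right :: "(nat \<Rightarrow> ('d::finite) sop) \<Rightarrow> 'd sop \<Rightarrow> (nat \<Rightarrow> 'd sop \<Rightarrow> 'd sop) \<Rightarrow> nat \<Rightarrow> nat list \<Rightarrow> complex" where
  "corr_right \<sigma> \<rho> E n \<mu>s =
    (\<Sum>as\<in>outcome_lists (\<lambda>k. eigenvalues (\<sigma> (\<mu>s!k))) (Suc n).
        (\<Prod>k<Suc n. as!k) * QKD_right \<rho> E n (\<lambda>k. spectral_projector (\<sigma> (\<mu>s!k)) (as!k)))"

definition corr_left :: "(nat \<Rightarrow> ('d::finite) sop) \<Rightarrow> 'd sop \<Rightarrow> (nat \<Rightarrow> 'd sop \<Rightarrow> 'd sop) \<Rightarrow> nat \<Rightarrow> nat list \<Rightarrow> complex" where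
  "corr_left \<sigma> \<rho> E n \<mu>s =
    (\<Sum>as\<in>outcome_lists (\<lambda>k. eigenvalues (\<sigma> (\<mu>s!k))) (Suc n).
        (\<Prod>k<Suc n. as!k) * QKD_left \<rho> E n (\<lambda>k. spectral_projector (\<sigma> (\<mu>s!k)) (as!k)))"

definition corr_doubled :: "(nat \<Rightarrow> ('d::finite) sop) \<Rightarrow> 'd sop \<Rightarrow> (nat \<Rightarrow> 'd sop \<Rightarrow> 'd sop) \<Rightarrow> nat
                              \<Rightarrow> nat list \<Rightarrow> nat list \<Rightarrow> complex" where
  "corr_doubled \<sigma> \<rho> E n \<mu>s \<nu>s =
    (\<Sum>as\<in>outcome_lists (\<lambda>k. eigenvalues (\<sigma> (\<mu>s!k))) (Suc n).
      \<Sum>bs\<in>outcome_lists (\<lambda>k. eigenvalues (\<sigma> (\<nu>s!k))) (Suc n).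
        (\<Prod>k<Suc n. as!k) * (\<Prod>k<Suc n. bs!k) *
        QKD_doubled \<rho> E n (\<lambda>k. spectral_projector (\<sigma> (\<mu>s!k)) (as!k))
                          (\<lambda>k. spectral_projector (\<sigma> (\<nu>s!k)) (bs!k)))"

definition idx_lists :: "nat \<Rightarrow> 'd list set" where
  "idx_lists m = {xs. length xs = m}"

definition tensor :: "nat \<Rightarrow> (nat \<Rightarrow> 'd sop) \<Rightarrow> 'd mop" where
  "tensor m A xs ys = (\<Prod>k<m. A k (xs!k) (ys!k))"

definition tensor2 :: "nat \<Rightarrow> (nat \<Rightarrow> 'd sop) \<Rightarrow> (nat \<Rightarrow> 'd sop) \<Rightarrow> 'd dop" where
  "tensor2 m A B = (\<lambda>(xl, xr) (yl, yr). tensor m A xl yl * tensor m B xr yr)"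

definition mul_on :: "'i set \<Rightarrow> ('i \<Rightarrow> 'i \<Rightarrow> complex) \<Rightarrow> ('i \<Rightarrow> 'i \<Rightarrow> complex) \<Rightarrow> ('i \<Rightarrow> 'i \<Rightarrow> complex)" where
  "mul_on I A B x y = (\<Sum>z\<in>I. A x z * B z y)"

definition tr_on :: "'i set \<Rightarrow> ('i \<Rightarrow> 'i \<Rightarrow> complex) \<Rightarrow> complex" where
  "tr_on I A = (\<Sum>x\<in>I. A x x)"

definition op_adj :: "('i \<Rightarrow> 'i \<Rightarrow> complex) \<Rightarrow> ('i \<Rightarrow> 'i \<Rightarrow> complex)" where
  "op_adj A x y = cnj (A y x)"

definition mop_eq :: "nat \<Rightarrow> 'd mop \<Rightarrow> 'd mop \<Rightarrow> bool" where
  "mop_eq m A B \<longleftrightarrow> (\<forall>xs\<in>idx_lists m. \<forall>ys\<in>idx_lists m. A xs ys = B xs ys)"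

definition dop_eq :: "nat \<Rightarrow> 'd dop \<Rightarrow> 'd dop \<Rightarrow> bool" where
  "dop_eq m A B \<longleftrightarrow> (\<forall>x\<in>idx_lists m \<times> idx_lists m. \<forall>y\<in>idx_lists m \<times> idx_lists m. A x y = B x y)"

definition ptrace_L :: "nat \<Rightarrow> 'd dop \<Rightarrow> 'd mop" where
  "ptrace_L m Y xs ys = (\<Sum>zs\<in>idx_lists m. Y (zs, xs) (zs, ys))"

definition ptrace_R :: "nat \<Rightarrow> 'd dop \<Rightarrow> 'd mop" where
  "ptrace_R m Y xs ys = (\<Sum>zs\<in>idx_lists m. Y (xs, zs) (ys, zs))"

text \<open>Partial trace over all time steps t < m not in the list ts (ts increasing);
  the result lives on the sites ts!0, ts!1, ...\<close>
definition keep_pairs :: "nat \<Rightarrow> nat list \<Rightarrow> 'd list \<Rightarrow> 'd list \<Rightarrow> ('d list \<times> 'd list) set" where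
  "keep_pairs m ts xs ys = {(zs, ws). length zs = m \<and> length ws = m \<and>
      (\<forall>j<length ts. zs!(ts!j) = xs!j \<and> ws!(ts!j) = ys!j) \<and>
      (\<forall>t<m. t \<notin> set ts \<longrightarrow> zs!t = ws!t)}"

definition ptrace_keep :: "nat \<Rightarrow> nat list \<Rightarrow> 'd mop \<Rightarrow> 'd mop" where
  "ptrace_keep m ts Y xs ys = (\<Sum>(zs, ws)\<in>keep_pairs m ts xs ys. Y zs ws)"

definition ptrace_keep2 :: "nat \<Rightarrow> nat list \<Rightarrow> 'd dop \<Rightarrow> 'd dop" where
  "ptrace_keep2 m ts Y = (\<lambda>(xl, xr) (yl, yr).
      \<Sum>(zl, wl)\<in>keep_pairs m ts xl yl. \<Sum>(zr, wr)\<in>keep_pairs m ts xr yr. Y (zl, zr) (wl, wr))"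

definition KD_state_right :: "(nat \<Rightarrow> ('d::finite) sop) \<Rightarrow> 'd sop \<Rightarrow> (nat \<Rightarrow> 'd sop \<Rightarrow> 'd sop) \<Rightarrow> nat \<Rightarrow> 'd mop" where
  "KD_state_right \<sigma> \<rho> E n xs ys = (1 / of_nat CARD('d) ^ Suc n) *
     (\<Sum>\<mu>s\<in>pauli_idx CARD('d) (Suc n). corr_right \<sigma> \<rho> E n \<mu>s * tensor (Suc n) (\<lambda>k. \<sigma> (\<mu>s!k)) xs ys)"

definition KD_state_left :: "(nat \<Rightarrow> ('d::finite) sop) \<Rightarrow> 'd sop \<Rightarrow> (nat \<Rightarrow> 'd sop \<Rightarrow> 'd sop) \<Rightarrow> nat \<Rightarrow> 'd mop" where
  "KD_state_left \<sigma> \<rho> E n xs ys = (1 / of_nat CARD('d) ^ Suc n) *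
     (\<Sum>\<mu>s\<in>pauli_idx CARD('d) (Suc n). corr_left \<sigma> \<rho> E n \<mu>s * tensor (Suc n) (\<lambda>k. \<sigma> (\<mu>s!k)) xs ys)"

definition MH_state :: "(nat \<Rightarrow> ('d::finite) sop) \<Rightarrow> 'd sop \<Rightarrow> (nat \<Rightarrow> 'd sop \<Rightarrow> 'd sop) \<Rightarrow> nat \<Rightarrow> 'd mop" where
  "MH_state \<sigma> \<rho> E n xs ys = (1 / of_nat CARD('d) ^ Suc n) *
     (\<Sum>\<mu>s\<in>pauli_idx CARD('d) (Suc n).
        complex_of_real (Re (corr_right \<sigma> \<rho> E n \<mu>s)) * tensor (Suc n) (\<lambda>k. \<sigma> (\<mu>s!k)) xs ys)"

definition KD_state_doubled :: "(nat \<Rightarrow> ('d::finite) sop) \<Rightarrow> 'd sop \<Rightarrow> (nat \<Rightarrow> 'd sop \<Rightarrow> 'd sop) \<Rightarrow> nat \<Rightarrow> 'd dop" where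
  "KD_state_doubled \<sigma> \<rho> E n x y = (1 / of_nat CARD('d) ^ (2 * Suc n)) *
     (\<Sum>\<mu>s\<in>pauli_idx CARD('d) (Suc n). \<Sum>\<nu>s\<in>pauli_idx CARD('d) (Suc n).
        corr_doubled \<sigma> \<rho> E n \<mu>s \<nu>s * tensor2 (Suc n) (\<lambda>k. \<sigma> (\<mu>s!k)) (\<lambda>k. \<sigma> (\<nu>s!k)) x y)"

definition MH_state_doubled :: "(nat \<Rightarrow> ('d::finite) sop) \<Rightarrow> 'd sop \<Rightarrow> (nat \<Rightarrow> 'd sop \<Rightarrow> 'd sop) \<Rightarrow> nat \<Rightarrow> 'd dop" where
  "MH_state_doubled \<sigma> \<rho> E n x y = (1 / of_nat CARD('d) ^ (2 * Suc n)) *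
     (\<Sum>\<mu>s\<in>pauli_idx CARD('d) (Suc n). \<Sum>\<nu>s\<in>pauli_idx CARD('d) (Suc n).
        complex_of_real (Re (corr_doubled \<sigma> \<rho> E n \<mu>s \<nu>s)) *
        tensor2 (Suc n) (\<lambda>k. \<sigma> (\<mu>s!k)) (\<lambda>k. \<sigma> (\<nu>s!k)) x y)"

text \<open>chan_seq E a l = E_{a+l} \<circ> ... \<circ> E_{a+1}\<close>
fun chan_seq :: "(nat \<Rightarrow> 'd sop \<Rightarrow> 'd sop) \<Rightarrow> nat \<Rightarrow> nat \<Rightarrow> 'd sop \<Rightarrow> 'd sop" where
  "chan_seq E a 0 = id"
| "chan_seq E a (Suc l) = E (a + Suc l) \<circ> chan_seq E a l"

definition evolved_state :: "'d sop \<Rightarrow> (nat \<Rightarrow> 'd sop \<Rightarrow> 'd sop) \<Rightarrow> nat \<Rightarrow> 'd sop" where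
  "evolved_state \<rho> E k = chan_seq E 0 k \<rho>"

text \<open>channels of the sub-process at times t_{ts!0}, ..., t_{ts!k}:
  E'_j = E_{ts!j} \<circ> ... \<circ> E_{ts!(j-1)+1}  (j \<ge> 1)\<close>
definition sub_channels :: "(nat \<Rightarrow> 'd sop \<Rightarrow> 'd sop) \<Rightarrow> nat list \<Rightarrow> nat \<Rightarrow> 'd sop \<Rightarrow> 'd sop" where
  "sub_channels E ts j = chan_seq E (ts!(j-1)) (ts!j - ts!(j-1))"

end

(*
  Every Kirkwood-Dirac quasiprobability is the trace of a sandwich chain rho -> L_k E_k(.) R_k,
  which is linear in each inserted operator L_k, R_k.  A multilinear functional is determined by
  its values on matrix units, and both the spectral decompositions defining the correlators and
  the completeness relation of the Pauli basis are instances of multilinear expansion.  Hence every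
  temporal state is, entrywise, a quasiprobability with matrix units inserted: the right KD state
  at (x, y) is Q(1; |y><x|), the left one Q(|y><x|; 1), the doubled one Q(|y_L><x_L|; |y_R><x_R|).
  Everything else follows from this closed form.  The Born rules are the kernel expansion read
  backwards; partial traces replace the traced matrix units by identities, which drop out of the
  chain by trace preservation or compose the channels in between (Kolmogorov consistency); the
  adjoint relations come from the Hermiticity preservation of completely positive maps; and the
  MH states are the Hermitian parts of the KD states.
*)

theory Submission
  imports Defs "HOL-Computational_Algebra.Fundamental_Theorem_Algebra"
begin

lemma outcome_lists_0 [simp]: "outcome_lists S 0 = {[]}"
  by (auto simp: outcome_lists_def)

lemma outcome_lists_Suc:
  "outcome_lists S (Suc m) = (\<lambda>(xs, x). xs @ [x]) ` (outcome_lists S m \<times> S m)"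
proof (intro set_eqI iffI)
  fix ys assume "ys \<in> outcome_lists S (Suc m)"
  then have len: "length ys = Suc m" and el: "\<forall>k<Suc m. ys!k \<in> S k"
    by (auto simp: outcome_lists_def)
  then obtain xs x where ys: "ys = xs @ [x]" and lx: "length xs = m"
    by (metis append_butlast_last_id length_0_conv length_butlast diff_Suc_1 nat.distinct(1))
  have "xs \<in> outcome_lists S m"
    unfolding outcome_lists_def
  proof (intro CollectI conjI allI impI lx)
    fix k assume "k < m"
    then show "xs!k \<in> S k" using el[rule_format, of k] ys lx by (simp add: nth_append)
  qed
  moreover have "x \<in> S m"
    using el ys lx by (metis lessI nth_append_length)
  ultimately show "ys \<in> (\<lambda>(xs, x). xs @ [x]) ` (outcome_lists S m \<times> S m)"
    using ys by force
qed (auto simp: outcome_lists_def nth_append less_Suc_eq)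

lemma finite_outcome_lists: "(\<And>k. k < m \<Longrightarrow> finite (S k)) \<Longrightarrow> finite (outcome_lists S m)"
  by (induction m) (auto simp: outcome_lists_Suc)

lemma sum_outcome_lists_Suc:
  "sum f (outcome_lists S (Suc m)) = (\<Sum>xs\<in>outcome_lists S m. \<Sum>x\<in>S m. f (xs @ [x]))"
proof -
  have "inj_on (\<lambda>(xs, x). xs @ [x]) (outcome_lists S m \<times> S m)"
    by (auto simp: inj_on_def)
  then show ?thesis
    by (simp add: outcome_lists_Suc sum.reindex sum.cartesian_product case_prod_unfold)
qed

lemma idx_lists_eq_outcome_lists: "idx_lists m = outcome_lists (\<lambda>_. UNIV) m"
  by (auto simp: idx_lists_def outcome_lists_def)

lemma pauli_idx_eq_outcome_lists: "pauli_idx d m = outcome_lists (\<lambda>_. {..<d^2}) m"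
  by (auto simp: pauli_idx_def outcome_lists_def)

lemma finite_idx_lists [simp]: "finite (idx_lists m :: ('d::finite) list set)"
  unfolding idx_lists_eq_outcome_lists by (rule finite_outcome_lists) simp

lemma finite_pauli_idx [simp]: "finite (pauli_idx d m)"
  unfolding pauli_idx_eq_outcome_lists by (rule finite_outcome_lists) simp

definition munit :: "'d \<Rightarrow> 'd \<Rightarrow> 'd sop" where
  "munit a b = (\<lambda>i j. if i = a \<and> j = b then 1 else 0)"

definition munits :: "'d list \<Rightarrow> 'd list \<Rightarrow> nat \<Rightarrow> 'd sop" where
  "munits as bs = (\<lambda>k. munit (as!k) (bs!k))"

lemma mmul_munit_left: "mmul (munit x y) B i j = (if i = x then B y j else 0)"
  by (simp add: mmul_def munit_def if_distrib[of "\<lambda>v. v * _"] cong: if_cong)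

lemma mmul_munit_right: "mmul B (munit x y) i j = (if j = y then B i x else 0)"
  by (simp add: mmul_def munit_def if_distrib[of "\<lambda>v. _ * v"] cong: if_cong)

lemma mmul_idm_left [simp]: "mmul idm B = B"
  by (intro ext) (simp add: mmul_def idm_def if_distrib[of "\<lambda>v. v * _"] cong: if_cong)

lemma mmul_idm_right [simp]: "mmul B idm = B"
  by (intro ext) (simp add: mmul_def idm_def if_distrib[of "\<lambda>v. _ * v"] cong: if_cong)

lemma mmul_assoc: "mmul (mmul A B) C = mmul A (mmul B C)"
proof (intro ext)
  fix i j
  have "mmul (mmul A B) C i j = (\<Sum>k\<in>UNIV. \<Sum>l\<in>UNIV. A i l * B l k * C k j)"
    by (simp add: mmul_def sum_distrib_right)
  also have "\<dots> = mmul A (mmul B C) i j"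
    by (subst sum.swap) (simp add: mmul_def sum_distrib_left mult.assoc)
  finally show "mmul (mmul A B) C i j = mmul A (mmul B C) i j" .
qed

lemma mtr_mmul_munit_right: "mtr (mmul X (munit y x)) = X x y"
  by (simp add: mtr_def mmul_munit_right)

lemma mtr_mmul_munit_left: "mtr (mmul (munit y x) X) = X x y"
  by (simp add: mtr_def mmul_munit_left)

lemma prod_lessThan_indicator:
  "(\<Prod>k<(m::nat). (if P k then 1 else 0 :: complex)) = (if \<forall>k<m. P k then 1 else 0)"
  by (induction m) (auto simp: less_Suc_eq)

lemma tensor_idm:
  assumes "a \<in> idx_lists m" "b \<in> idx_lists m"
  shows "tensor m (\<lambda>_. idm) a b = (if a = b then 1 else 0)"
proof -
  have "tensor m (\<lambda>_. idm) a b = (if \<forall>k<m. a!k = b!k then 1 else 0)"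
    unfolding tensor_def idm_def by (rule prod_lessThan_indicator)
  with assms show ?thesis by (auto simp: idx_lists_def intro: nth_equalityI)
qed

section \<open>Multilinear functionals\<close>

definition clinear_functional :: "('d sop \<Rightarrow> complex) \<Rightarrow> bool" where
  "clinear_functional f \<longleftrightarrow>
     (\<forall>A B. f (\<lambda>i j. A i j + B i j) = f A + f B) \<and> (\<forall>c A. f (\<lambda>i j. c * A i j) = c * f A)"

lemma clinear_functional_sum:
  assumes f: "clinear_functional f" and fin: "finite S"
  shows "f (\<lambda>i j. \<Sum>x\<in>S. c x * A x i j) = (\<Sum>x\<in>S. c x * f (A x))"
  using fin
proof (induction S rule: finite_induct)
  case empty
  have "f (\<lambda>i j. 0 * idm i j) = 0 * f idm"
    using f unfolding clinear_functional_def by blast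
  then show ?case by simp
next
  case (insert x S)
  then show ?case
    using f unfolding clinear_functional_def
    by (simp del: sum.insert add: sum.insert[OF insert.hyps])
qed

lemma clinear_map_iff_functional: "clinear_map E \<longleftrightarrow> (\<forall>i j. clinear_functional (\<lambda>A. E A i j))"
  by (auto simp: clinear_map_def clinear_functional_def fun_eq_iff)

lemma clinear_map_sum:
  assumes "clinear_map E" "finite S"
  shows "E (\<lambda>i j. \<Sum>x\<in>S. c x * A x i j) = (\<lambda>i j. \<Sum>x\<in>S. c x * E (A x) i j)"
  using assms clinear_functional_sum by (fastforce simp: clinear_map_iff_functional)

lemma clinear_map_comp: "clinear_map F \<Longrightarrow> clinear_map G \<Longrightarrow> clinear_map (F \<circ> G)"
  unfolding clinear_map_def by simp

lemma clinear_map_id: "clinear_map id"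
  unfolding clinear_map_def by simp

lemma clinear_map_mmul_left: "clinear_map (\<lambda>X. mmul X B)"
  unfolding clinear_map_def mmul_def by (simp add: algebra_simps sum.distrib sum_distrib_left)

lemma clinear_map_mmul_right: "clinear_map (\<lambda>X. mmul B X)"
  unfolding clinear_map_def mmul_def by (simp add: algebra_simps sum.distrib sum_distrib_left)

lemma clinear_functional_mtr_comp: "clinear_map G \<Longrightarrow> clinear_functional (\<lambda>A. mtr (G A))"
  unfolding clinear_map_def clinear_functional_def mtr_def by (simp add: sum.distrib sum_distrib_left)

definition multilinear :: "nat \<Rightarrow> ((nat \<Rightarrow> 'd sop) \<Rightarrow> complex) \<Rightarrow> bool" where
  "multilinear m F \<longleftrightarrow> (\<forall>k<m. \<forall>P. clinear_functional (\<lambda>A. F (P(k := A)))) \<and>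
     (\<forall>P P'. (\<forall>k<m. P k = P' k) \<longrightarrow> F P = F P')"

lemma multilinear_cong: "multilinear m F \<Longrightarrow> (\<And>k. k < m \<Longrightarrow> P k = P' k) \<Longrightarrow> F P = F P'"
  unfolding multilinear_def by blast

lemma multilinear_expansion:
  assumes F: "multilinear m F" and fin: "\<And>k. k < m \<Longrightarrow> finite (S k)"
  shows "F (\<lambda>k i j. \<Sum>x\<in>S k. c k x * A k x i j)
       = (\<Sum>xs\<in>outcome_lists S m. (\<Prod>k<m. c k (xs!k)) * F (\<lambda>k. A k (xs!k)))"
proof -
  define B where "B = (\<lambda>k i j. \<Sum>x\<in>S k. c k x * A k x i j)"
  define G where "G xs = (\<lambda>k. if k < length xs then A k (xs!k) else B k)" for xs
  have "l \<le> m \<Longrightarrow> F B = (\<Sum>xs\<in>outcome_lists S l. (\<Prod>k<l. c k (xs!k)) * F (G xs))" for l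
  proof (induction l)
    case 0
    then show ?case by (simp add: G_def)
  next
    case (Suc l)
    have "F (G xs) = (\<Sum>x\<in>S l. c l x * F (G (xs @ [x])))" if xs: "xs \<in> outcome_lists S l" for xs
    proof -
      have len: "length xs = l" using xs by (simp add: outcome_lists_def)
      have "clinear_functional (\<lambda>X. F ((G xs)(l := X)))"
        using F Suc.prems unfolding multilinear_def by simp
      then have "F ((G xs)(l := B l)) = (\<Sum>x\<in>S l. c l x * F ((G xs)(l := A l x)))"
        unfolding B_def by (rule clinear_functional_sum) (use fin Suc.prems in simp)
      moreover have "(G xs)(l := B l) = G xs" "(G xs)(l := A l x) = G (xs @ [x])" for x
        using len by (auto simp: G_def nth_append fun_eq_iff)
      ultimately show ?thesis by simp
    qed
    moreover have "(\<Prod>k<Suc l. c k ((xs @ [x])!k)) = (\<Prod>k<l. c k (xs!k)) * c l x"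
      if "xs \<in> outcome_lists S l" for xs x
      using that by (simp add: outcome_lists_def nth_append)
    ultimately have "(\<Sum>xs\<in>outcome_lists S l. (\<Prod>k<l. c k (xs!k)) * F (G xs))
        = (\<Sum>xs\<in>outcome_lists S (Suc l). (\<Prod>k<Suc l. c k (xs!k)) * F (G xs))"
      by (simp only: sum_outcome_lists_Suc sum_distrib_left mult.assoc cong: sum.cong)
    with Suc show ?case by simp
  qed
  from this[of m] have "F B = (\<Sum>xs\<in>outcome_lists S m. (\<Prod>k<m. c k (xs!k)) * F (G xs))"
    by simp
  also have "\<dots> = (\<Sum>xs\<in>outcome_lists S m. (\<Prod>k<m. c k (xs!k)) * F (\<lambda>k. A k (xs!k)))"
    by (intro sum.cong refl arg_cong2[where f = "(*)"] multilinear_cong[OF F])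
      (simp add: G_def outcome_lists_def)
  finally show ?thesis by (simp add: B_def)
qed

lemma multilinear_kernel:
  fixes F :: "(nat \<Rightarrow> ('d::finite) sop) \<Rightarrow> complex"
  assumes F: "multilinear m F"
  shows "F P = (\<Sum>a\<in>idx_lists m. \<Sum>b\<in>idx_lists m. tensor m P a b * F (munits a b))"
proof -
  define row where "row k x = (\<lambda>i j. if i = x then P k x j else 0)" for k x
  have "P = (\<lambda>k i j. \<Sum>x\<in>UNIV. 1 * row k x i j)"
    by (simp add: row_def fun_eq_iff sum.delta')
  then have "F P = (\<Sum>a\<in>idx_lists m. F (\<lambda>k. row k (a!k)))"
    using multilinear_expansion[OF F, of "\<lambda>_. UNIV" "\<lambda>_ _. 1" row]
    by (simp add: idx_lists_eq_outcome_lists)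
  also have "\<dots> = (\<Sum>a\<in>idx_lists m. \<Sum>b\<in>idx_lists m. tensor m P a b * F (munits a b))"
  proof (rule sum.cong[OF refl])
    fix a :: "'d list"
    have "(\<lambda>k. row k (a!k)) = (\<lambda>k i j. \<Sum>y\<in>UNIV. P k (a!k) y * munit (a!k) y i j)"
      by (simp add: row_def munit_def fun_eq_iff if_distrib[of "\<lambda>v. _ * v"] cong: if_cong)
    then show "F (\<lambda>k. row k (a!k)) = (\<Sum>b\<in>idx_lists m. tensor m P a b * F (munits a b))"
      using multilinear_expansion[OF F, of "\<lambda>_. UNIV" "\<lambda>k y. P k (a!k) y" "\<lambda>k y. munit (a!k) y"]
      by (simp add: idx_lists_eq_outcome_lists tensor_def munits_def)
  qed
  finally show ?thesis .
qed

lemma multilinear_kernel_idm: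
  fixes F :: "(nat \<Rightarrow> ('d::finite) sop) \<Rightarrow> complex"
  assumes "multilinear m F"
  shows "F (\<lambda>_. idm) = (\<Sum>z\<in>idx_lists m. F (munits z z))"
proof -
  have "tensor m (\<lambda>_. idm) a b * F (munits a b) = (if a = b then F (munits a a) else 0)"
    if "a \<in> idx_lists m" "b \<in> idx_lists m" for a b
    using tensor_idm[OF that] by simp
  then show ?thesis
    by (simp add: multilinear_kernel[OF assms, of "\<lambda>_. idm"] cong: sum.cong)
qed

section \<open>Polynomials evaluated at a matrix\<close>

definition madd :: "'d sop \<Rightarrow> 'd sop \<Rightarrow> 'd sop" where "madd A B = (\<lambda>i j. A i j + B i j)"

definition mscale :: "complex \<Rightarrow> 'd sop \<Rightarrow> 'd sop" where "mscale c A = (\<lambda>i j. c * A i j)"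

definition mzero :: "'d sop" where "mzero = (\<lambda>i j. 0)"

lemma mmul_mzero_right [simp]: "mmul A mzero = mzero"
  by (intro ext) (simp add: mmul_def mzero_def)

lemma mmul_mzero_left [simp]: "mmul mzero A = mzero"
  by (intro ext) (simp add: mmul_def mzero_def)

lemma mmul_madd_left: "mmul (madd X Y) Z = madd (mmul X Z) (mmul Y Z)"
  by (intro ext) (simp add: mmul_def madd_def algebra_simps sum.distrib)

lemma mmul_madd_right: "mmul Z (madd X Y) = madd (mmul Z X) (mmul Z Y)"
  by (intro ext) (simp add: mmul_def madd_def algebra_simps sum.distrib)

lemma mmul_mscale_left: "mmul (mscale c X) Z = mscale c (mmul X Z)"
  by (intro ext) (simp add: mmul_def mscale_def sum_distrib_left mult.assoc)

lemma mmul_mscale_right: "mmul Z (mscale c X) = mscale c (mmul Z X)"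
  by (intro ext) (simp add: mmul_def mscale_def sum_distrib_left algebra_simps)

lemma madd_mzero [simp]: "madd A mzero = A" "madd mzero A = A"
  by (simp_all add: madd_def mzero_def)

lemma mscale_0 [simp]: "mscale 0 A = mzero" by (simp add: mscale_def mzero_def)

lemma mscale_1 [simp]: "mscale 1 A = A" by (simp add: mscale_def)

lemma mscale_mzero [simp]: "mscale c mzero = mzero" by (simp add: mscale_def mzero_def)

fun mpow :: "('d::finite) sop \<Rightarrow> nat \<Rightarrow> 'd sop" where
  "mpow A 0 = idm"
| "mpow A (Suc k) = mmul A (mpow A k)"

definition peval :: "complex poly \<Rightarrow> ('d::finite) sop \<Rightarrow> 'd sop" where
  "peval p A = fold_coeffs (\<lambda>a M. madd (mscale a idm) (mmul A M)) p mzero"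

lemma peval_0 [simp]: "peval 0 A = mzero"
  by (simp add: peval_def)

lemma peval_pCons: "peval (pCons a p) A = madd (mscale a idm) (mmul A (peval p A))"
proof (cases "p = 0 \<and> a = 0")
  case True then show ?thesis by (simp add: peval_def)
next
  case False
  then have "fold_coeffs (\<lambda>a M. madd (mscale a idm) (mmul A M)) (pCons a p)
      = (\<lambda>a M. madd (mscale a idm) (mmul A M)) a \<circ> fold_coeffs (\<lambda>a M. madd (mscale a idm) (mmul A M)) p"
    by auto
  then show ?thesis by (simp add: peval_def)
qed

lemma peval_add: "peval (p + q) A = madd (peval p A) (peval q A)"
proof (induction p q rule: poly_induct2)
  case 0 then show ?case by simp
next
  case (pCons a p b q)
  then show ?case
    by (simp add: peval_pCons mmul_madd_right) (simp add: madd_def mscale_def algebra_simps)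
qed

lemma peval_smult: "peval (smult c p) A = mscale c (peval p A)"
proof (induction p)
  case 0 then show ?case by simp
next
  case (pCons a p)
  then show ?case
    by (simp add: peval_pCons mmul_mscale_right) (simp add: madd_def mscale_def algebra_simps)
qed

lemma peval_mult: "peval (p * q) A = mmul (peval p A) (peval q A)"
proof (induction p)
  case 0 then show ?case by simp
next
  case (pCons a p)
  have "peval (pCons a p * q) A = madd (mscale a (peval q A)) (mmul A (peval (p * q) A))"
    by (simp add: peval_add peval_smult peval_pCons)
  also have "\<dots> = mmul (peval (pCons a p) A) (peval q A)"
    using pCons by (simp add: peval_pCons mmul_madd_left mmul_mscale_left mmul_assoc)
  finally show ?case .
qed

lemma peval_const: "peval [:c:] A = mscale c idm"
  by (simp add: peval_pCons)

lemma peval_x: "peval [:0, 1:] A = A"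
  by (simp add: peval_pCons)

lemma peval_monom: "peval (monom c k) A = mscale c (mpow A k)"
proof (induction k)
  case 0 then show ?case by (simp add: monom_0 peval_const)
next
  case (Suc k)
  then show ?case by (simp add: monom_Suc peval_pCons mmul_mscale_right)
qed

lemma peval_sum: "finite S \<Longrightarrow> peval (\<Sum>x\<in>S. p x) A i j = (\<Sum>x\<in>S. peval (p x) A i j)"
  by (induction S rule: finite_induct) (simp_all add: peval_add madd_def mzero_def)

lemma peval_diff: "peval (p - q) A i j = peval p A i j - peval q A i j"
proof -
  have eq: "p - q = p + smult (-1) q" by simp
  have "peval (p - q) A = madd (peval p A) (mscale (-1) (peval q A))"
    unfolding eq by (simp only: peval_add peval_smult)
  then show ?thesis by (simp add: madd_def mscale_def)
qed

lemma peval_commute: "mmul (peval p A) (peval q A) = mmul (peval q A) (peval p A)"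
  by (metis peval_mult mult.commute)

lemma mvec_mmul: "mvec (mmul X Y) v = mvec X (mvec Y v)"
proof (rule ext)
  fix i
  have "mvec (mmul X Y) v i = (\<Sum>j\<in>UNIV. \<Sum>k\<in>UNIV. X i k * Y k j * v j)"
    by (simp add: mvec_def mmul_def sum_distrib_right)
  also have "\<dots> = (\<Sum>k\<in>UNIV. \<Sum>j\<in>UNIV. X i k * Y k j * v j)" by (rule sum.swap)
  also have "\<dots> = mvec X (mvec Y v) i" by (simp add: mvec_def sum_distrib_left mult.assoc)
  finally show "mvec (mmul X Y) v i = mvec X (mvec Y v) i" .
qed

lemma mvec_madd: "mvec (madd X Y) v = (\<lambda>i. mvec X v i + mvec Y v i)"
  by (intro ext) (simp add: mvec_def madd_def algebra_simps sum.distrib)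

lemma mvec_mscale: "mvec (mscale c X) v = (\<lambda>i. c * mvec X v i)"
  by (intro ext) (simp add: mvec_def mscale_def sum_distrib_left mult.assoc)

lemma mvec_idm [simp]: "mvec idm v = v"
  by (intro ext) (simp add: mvec_def idm_def if_distrib[of "\<lambda>z. z * _"] cong: if_cong)

lemma mvec_mzero [simp]: "mvec mzero v = (\<lambda>i. 0)"
  by (intro ext) (simp add: mvec_def mzero_def)

lemma mvec_scale: "mvec X (\<lambda>i. c * v i) = (\<lambda>i. c * mvec X v i)"
  by (intro ext) (simp add: mvec_def sum_distrib_left algebra_simps)

lemma mvec_peval_eigenvector:
  assumes "mvec A v = (\<lambda>i. e * v i)"
  shows "mvec (peval p A) v = (\<lambda>i. poly p e * v i)"
proof (induction p)
  case 0 then show ?case by simp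
next
  case (pCons a p)
  show ?case
    by (simp add: peval_pCons mvec_madd mvec_mscale mvec_mmul pCons.IH mvec_scale assms) (simp add: algebra_simps)
qed

lemma sop_eqI_mvec: "(\<And>v. mvec X v = mvec Y v) \<Longrightarrow> X = (Y :: ('d::finite) sop)"
proof (intro ext)
  fix i j
  assume h: "\<And>v. mvec X v = mvec Y v"
  have "\<And>Z :: 'd sop. mvec Z (\<lambda>k. if k = j then 1 else 0) i = Z i j"
    by (simp add: mvec_def if_distrib[of "\<lambda>z. _ * z"] cong: if_cong)
  then show "X i j = Y i j" using h by metis
qed

lemma peval_linear: "peval [:-r, 1:] A = madd (mscale (-r) idm) A"
  by (simp add: peval_pCons)

lemma mvec_peval_linear: "mvec (peval [:-r, 1:] A) w = (\<lambda>i. mvec A w i - r * w i)"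
  by (simp add: peval_linear mvec_madd mvec_mscale)

lemma hermitian_iff_op_adj: "hermitian A \<longleftrightarrow> op_adj A = A"
proof
  assume "hermitian A"
  then show "op_adj A = A" unfolding hermitian_def op_adj_def
    by (intro ext) (metis complex_cnj_cnj)
next
  assume h: "op_adj A = A"
  show "hermitian A" unfolding hermitian_def
  proof (intro allI)
    fix i j
    have "A i j = op_adj A i j" using h by simp
    then show "A i j = cnj (A j i)" by (simp add: op_adj_def)
  qed
qed

lemma op_adj_mmul: "op_adj (mmul A B) = mmul (op_adj B) (op_adj A)"
  by (intro ext) (simp add: op_adj_def mmul_def mult.commute)

lemma op_adj_op_adj [simp]: "op_adj (op_adj A) = A"
  by (intro ext) (simp add: op_adj_def)

lemma sum_cnj_mult_self: "(\<Sum>i\<in>S. cnj (u i) * u i) = complex_of_real (\<Sum>i\<in>S. (cmod (u i))\<^sup>2)"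
proof -
  have "(\<Sum>i\<in>S. cnj (u i) * u i) = (\<Sum>i\<in>S. complex_of_real ((cmod (u i))\<^sup>2))"
    by (rule sum.cong[OF refl], subst complex_norm_square) (simp add: mult.commute)
  then show ?thesis by (simp only: of_real_sum)
qed

lemma sum_cnj_mult_self_eq_0:
  fixes u :: "('d::finite) \<Rightarrow> complex"
  assumes "(\<Sum>i\<in>UNIV. cnj (u i) * u i) = 0"
  shows "u = (\<lambda>i. 0 :: complex)"
proof -
  have "(\<Sum>i\<in>UNIV. (cmod (u i))\<^sup>2) = 0"
    using assms unfolding sum_cnj_mult_self by (simp only: of_real_eq_0_iff)
  then have "\<forall>i\<in>UNIV. (cmod (u i))\<^sup>2 = 0"
    by (subst sum_nonneg_eq_0_iff[symmetric]) auto
  then show ?thesis by auto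
qed

lemma sum_norm_square_pos:
  fixes u :: "('d::finite) \<Rightarrow> complex"
  assumes "u \<noteq> (\<lambda>i. 0)"
  shows "0 < (\<Sum>i\<in>UNIV. (cmod (u i))\<^sup>2)"
proof -
  obtain k where "u k \<noteq> 0" using assms by auto
  then show ?thesis by (intro sum_pos2[of UNIV k]) auto
qed

lemma inner_mvec_op_adj:
  fixes w u :: "('d::finite) \<Rightarrow> complex" and B :: "'d sop"
  shows "(\<Sum>i\<in>UNIV. cnj (w i) * mvec B u i) = (\<Sum>j\<in>UNIV. cnj (mvec (op_adj B) w j) * u j)"
proof -
  have "(\<Sum>i\<in>UNIV. cnj (w i) * mvec B u i) = (\<Sum>i\<in>UNIV. \<Sum>j\<in>UNIV. cnj (w i) * B i j * u j)"
    by (simp add: mvec_def sum_distrib_left mult.assoc)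
  also have "\<dots> = (\<Sum>j\<in>UNIV. \<Sum>i\<in>UNIV. cnj (w i) * B i j * u j)" by (rule sum.swap)
  also have "\<dots> = (\<Sum>j\<in>UNIV. cnj (mvec (op_adj B) w j) * u j)"
    by (simp add: mvec_def op_adj_def sum_distrib_right sum_distrib_left mult.commute)
  finally show ?thesis .
qed

lemma hermitian_form_real:
  fixes A :: "('d::finite) sop"
  assumes "hermitian A"
  shows "Im (\<Sum>i\<in>UNIV. cnj (v i) * mvec A v i) = 0"
proof -
  let ?z = "\<Sum>i\<in>UNIV. cnj (v i) * mvec A v i"
  have "?z = (\<Sum>j\<in>UNIV. cnj (mvec A v j) * v j)"
    using inner_mvec_op_adj[of v A v] assms by (simp add: hermitian_iff_op_adj)
  also have "\<dots> = cnj ?z" by (simp add: mult.commute)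
  finally show ?thesis by (metis Reals_cnj_iff complex_is_Real_iff)
qed

lemma hermitian_eigenvalue_real:
  fixes A :: "('d::finite) sop"
  assumes h: "hermitian A" and e: "e \<in> eigenvalues A"
  shows "e \<in> \<real>"
proof -
  obtain v where v: "v \<noteq> (\<lambda>_. 0)" "mvec A v = (\<lambda>i. e * v i)"
    using e by (auto simp: eigenvalues_def)
  have "(\<Sum>i\<in>UNIV. cnj (v i) * mvec A v i) = e * (\<Sum>i\<in>UNIV. cnj (v i) * v i)"
    by (simp add: v(2) sum_distrib_left algebra_simps)
  also have "\<dots> = e * complex_of_real (\<Sum>i\<in>UNIV. (cmod (v i))\<^sup>2)"
    by (simp only: sum_cnj_mult_self)
  finally have "(\<Sum>i\<in>UNIV. cnj (v i) * mvec A v i) = e * complex_of_real (\<Sum>i\<in>UNIV. (cmod (v i))\<^sup>2)" .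
  then have "Im (e * complex_of_real (\<Sum>i\<in>UNIV. (cmod (v i))\<^sup>2)) = 0"
    using hermitian_form_real[OF h, of v] by simp
  then show ?thesis using sum_norm_square_pos[OF v(1)] by (simp add: complex_is_Real_iff)
qed

lemma hermitian_square_annihilates:
  fixes B :: "('d::finite) sop"
  assumes h: "hermitian B" and z: "mvec B (mvec B w) = (\<lambda>i. 0)"
  shows "mvec B w = (\<lambda>i. 0 :: complex)"
proof -
  let ?u = "mvec B w"
  have "(\<Sum>i\<in>UNIV. cnj (?u i) * ?u i) = (\<Sum>j\<in>UNIV. cnj (mvec (op_adj B) ?u j) * w j)"
    by (rule inner_mvec_op_adj)
  also have "\<dots> = 0" using h z by (simp add: hermitian_iff_op_adj)
  finally have "(\<Sum>i\<in>UNIV. cnj (?u i) * ?u i) = 0" .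
  then show ?thesis by (rule sum_cnj_mult_self_eq_0)
qed

section \<open>Spectral decomposition of Hermitian matrices\<close>

declare mult_pCons_left [simp del] mult_pCons_right [simp del]

lemma euclidean_family_dependent:
  fixes f :: "nat \<Rightarrow> 'a::euclidean_space"
  obtains c where "\<exists>k\<le>DIM('a). c k \<noteq> 0" "(\<Sum>k\<le>DIM('a). c k *\<^sub>R f k) = 0"
proof (cases "inj_on f {..DIM('a)}")
  case True
  then have "dependent (f ` {..DIM('a)})"
    by (intro dependent_biggerset) (simp add: card_image)
  then obtain u where u: "\<exists>v\<in>f ` {..DIM('a)}. u v \<noteq> 0" "(\<Sum>v\<in>f ` {..DIM('a)}. u v *\<^sub>R v) = 0"
    using real_vector.dependent_finite[of "f ` {..DIM('a)}"] by auto
  show ?thesis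
    by (rule that[of "u \<circ> f"]) (use u True in \<open>auto simp: sum.reindex\<close>)
next
  case False
  then obtain k1 k2 where k: "k1 \<le> DIM('a)" "k2 \<le> DIM('a)" "k1 \<noteq> k2" "f k1 = f k2"
    by (auto simp: inj_on_def)
  show ?thesis
    by (rule that[of "\<lambda>k. of_bool (k = k1) - of_bool (k = k2)"])
      (use k in \<open>auto simp: scaleR_left_diff_distrib sum_subtractf of_bool_def
        if_distrib[of "\<lambda>c. c *\<^sub>R _"] cong: if_cong\<close>)
qed

text \<open>The powers of \<open>A\<close> live in the finite-dimensional space \<open>\<complex>\<^sup>d\<^sup>\<times>\<^sup>d\<close>, so finitely many of them
  are linearly dependent.\<close>
lemma ex_annihilating_poly:
  fixes A :: "('d::finite) sop"
  obtains p where "p \<noteq> 0" "peval p A = mzero"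
proof -
  define N where "N = DIM(complex^('d \<times> 'd))"
  define V :: "nat \<Rightarrow> complex^('d \<times> 'd)" where "V k = (\<chi> q. mpow A k (fst q) (snd q))" for k
  obtain c where c: "\<exists>k\<le>N. c k \<noteq> 0" "(\<Sum>k\<le>N. c k *\<^sub>R V k) = 0"
    unfolding N_def by (rule euclidean_family_dependent)
  define p where "p = (\<Sum>k\<le>N. monom (complex_of_real (c k)) k)"
  have "coeff p k = (if k \<le> N then complex_of_real (c k) else 0)" for k
    unfolding p_def by (simp add: coeff_sum)
  with c(1) have "p \<noteq> 0" by (metis coeff_0 of_real_eq_0_iff)
  moreover have "peval p A = mzero"
  proof (intro ext)
    fix i j
    have "peval p A i j = (\<Sum>k\<le>N. c k *\<^sub>R V k) $ (i, j)"
      by (simp add: p_def V_def peval_sum peval_monom mscale_def; simp add: scaleR_conv_of_real)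
    then show "peval p A i j = mzero i j"
      by (simp add: c(2) mzero_def)
  qed
  ultimately show ?thesis by (rule that)
qed

lemma eigenvalue_root_of_annihilator:
  assumes "peval p A = mzero" "e \<in> eigenvalues A"
  shows "poly p e = 0"
proof -
  obtain v where v: "v \<noteq> (\<lambda>_. 0)" "mvec A v = (\<lambda>i. e * v i)"
    using assms(2) by (auto simp: eigenvalues_def)
  then obtain k where "v k \<noteq> 0" by auto
  moreover have "poly p e * v k = 0"
    using fun_cong[OF mvec_peval_eigenvector[OF v(2), of p], of k] assms(1) by simp
  ultimately show ?thesis by simp
qed

lemma annihilator_drop_regular_root:
  fixes A :: "('d::finite) sop"
  assumes r: "r \<notin> eigenvalues A" and z: "peval (s * [:-r, 1:]) A = mzero"
  shows "peval s A = mzero"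
proof (rule sop_eqI_mvec)
  fix v :: "'d \<Rightarrow> complex"
  let ?w = "mvec (peval s A) v"
  have "mvec (peval [:-r, 1:] A) ?w = mvec (peval ([:-r, 1:] * s) A) v"
    by (simp only: peval_mult mvec_mmul)
  also have "\<dots> = (\<lambda>i. 0)" using z by (simp add: mult.commute)
  finally have "mvec A ?w = (\<lambda>i. r * ?w i)"
    unfolding mvec_peval_linear by (simp add: fun_eq_iff)
  then have "?w = (\<lambda>_. 0)" using r unfolding eigenvalues_def by blast
  then show "mvec (peval s A) v = mvec mzero v" by simp
qed

lemma hermitian_madd: "hermitian X \<Longrightarrow> hermitian Y \<Longrightarrow> hermitian (madd X Y)"
  unfolding hermitian_iff_op_adj by (intro ext) (metis complex_cnj_add madd_def op_adj_def)

lemma hermitian_mscale_idm: "c \<in> \<real> \<Longrightarrow> hermitian (mscale c idm)"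
  unfolding hermitian_def mscale_def idm_def by (simp add: Reals_cnj_iff)

lemma hermitian_peval_linear:
  assumes "hermitian A" "r \<in> \<real>"
  shows "hermitian (peval [:-r, 1:] A)"
  unfolding peval_linear
  by (intro hermitian_madd hermitian_mscale_idm assms) (simp add: assms(2))

lemma annihilator_drop_square:
  fixes A :: "('d::finite) sop"
  assumes h: "hermitian A" and r: "r \<in> \<real>" and z: "peval (s * [:-r, 1:]^2) A = mzero"
  shows "peval (s * [:-r, 1:]) A = mzero"
proof (rule sop_eqI_mvec)
  fix v :: "'d \<Rightarrow> complex"
  let ?B = "peval [:-r, 1:] A"
  let ?w = "mvec (peval s A) v"
  have "[:-r, 1:] * ([:-r, 1:] * s) = s * [:-r, 1:]^2"
    by (simp only: power2_eq_square ac_simps)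
  then have "mvec ?B (mvec ?B ?w) = (\<lambda>i. 0)"
    by (simp only: peval_mult[symmetric] mvec_mmul[symmetric] z mvec_mzero)
  then have "mvec ?B ?w = (\<lambda>i. 0)"
    by (rule hermitian_square_annihilates[OF hermitian_peval_linear[OF h r]])
  moreover have "mvec (peval (s * [:-r, 1:]) A) v = mvec ?B ?w"
    by (simp only: peval_mult[symmetric] mvec_mmul[symmetric] mult.commute[of s])
  ultimately show "mvec (peval (s * [:-r, 1:]) A) v = mvec mzero v" by simp
qed

text \<open>One linear factor of an annihilator is absorbed into the product over the eigenvalues:
  it disappears if it is not an eigenvalue, and a repeated factor is reduced by Hermiticity.\<close>
lemma annihilator_absorb_factor:
  fixes A :: "('d::finite) sop"
  assumes h: "hermitian A" and S: "finite S" "S \<subseteq> eigenvalues A"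
    and z: "peval (s * [:-x, 1:] * (\<Prod>y\<in>S. [:-y, 1:])) A = mzero"
  shows "peval (s * (\<Prod>y\<in>insert x S \<inter> eigenvalues A. [:-y, 1:])) A = mzero"
proof (cases "x \<in> eigenvalues A")
  case False
  then have "insert x S \<inter> eigenvalues A = S" using S(2) by auto
  moreover have "peval ((s * (\<Prod>y\<in>S. [:-y, 1:])) * [:-x, 1:]) A = mzero"
    using z by (simp add: ac_simps)
  ultimately show ?thesis using annihilator_drop_regular_root[OF False] by simp
next
  case x: True
  show ?thesis
  proof (cases "x \<in> S")
    case True
    have split: "(\<Prod>y\<in>S. [:-y, 1:]) = [:-x, 1:] * (\<Prod>y\<in>S - {x}. [:-y, 1:])"
      by (rule prod.remove[OF S(1) True])
    have "peval ((s * (\<Prod>y\<in>S - {x}. [:-y, 1:])) * [:-x, 1:]^2) A = mzero"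
      using z unfolding split by (simp add: power2_eq_square ac_simps)
    from annihilator_drop_square[OF h hermitian_eigenvalue_real[OF h x] this]
    show ?thesis using True S(2) by (simp add: insert_absorb Int_absorb2 split ac_simps)
  next
    case False
    then show ?thesis using z x S by (simp add: Int_absorb2 insert_subset ac_simps)
  qed
qed

lemma annihilator_reduce:
  fixes A :: "('d::finite) sop"
  assumes "hermitian A"
  shows "peval (s * (\<Prod>x\<in>#M. [:-x, 1:])) A = mzero \<Longrightarrow>
         peval (s * (\<Prod>x\<in>set_mset M \<inter> eigenvalues A. [:-x, 1:])) A = mzero"
proof (induction M arbitrary: s rule: multiset_induct)
  case empty
  then show ?case by simp
next
  case (add x M)
  have "peval ((s * [:-x, 1:]) * (\<Prod>y\<in>#M. [:-y, 1:])) A = mzero"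
    using add.prems by (simp add: ac_simps)
  from annihilator_absorb_factor[OF assms _ _ add.IH[OF this]]
  have "peval (s * (\<Prod>y\<in>insert x (set_mset M \<inter> eigenvalues A) \<inter> eigenvalues A. [:-y, 1:])) A = mzero"
    by blast
  moreover have "insert x (set_mset M \<inter> eigenvalues A) \<inter> eigenvalues A = set_mset (add_mset x M) \<inter> eigenvalues A"
    by auto
  ultimately show ?case by simp
qed

lemma eigenvalues_annihilate:
  fixes A :: "('d::finite) sop"
  assumes h: "hermitian A"
  shows "finite (eigenvalues A)" "peval (\<Prod>r\<in>eigenvalues A. [:-r, 1:]) A = mzero"
proof -
  obtain p where p: "p \<noteq> 0" "peval p A = mzero" by (rule ex_annihilating_poly)
  obtain M where M: "p = smult (lead_coeff p) (\<Prod>x\<in>#M. [:-x, 1:])"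
    using alg_closed_imp_factorization[OF p(1)] by blast
  have "peval (1 * (\<Prod>x\<in>#M. [:-x, 1:])) A = mzero"
    using p M peval_smult[of "lead_coeff p" "\<Prod>x\<in>#M. [:-x, 1:]" A]
    by (simp add: mscale_def mzero_def fun_eq_iff)
  from annihilator_reduce[OF h this]
  have R: "peval (\<Prod>x\<in>set_mset M \<inter> eigenvalues A. [:-x, 1:]) A = mzero" by simp
  have "eigenvalues A \<subseteq> set_mset M"
  proof
    fix e assume "e \<in> eigenvalues A"
    with eigenvalue_root_of_annihilator[OF R this]
    show "e \<in> set_mset M" by (simp add: poly_prod)
  qed
  then have "set_mset M \<inter> eigenvalues A = eigenvalues A" by blast
  with R show "finite (eigenvalues A)" "peval (\<Prod>r\<in>eigenvalues A. [:-r, 1:]) A = mzero"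
    by (metis finite_Int finite_set_mset)+
qed

lemma prod_roots_dvd:
  fixes D :: "complex poly"
  assumes "finite R" "\<forall>r\<in>R. poly D r = 0"
  shows "(\<Prod>r\<in>R. [:-r, 1:]) dvd D"
  using assms
proof (induction R arbitrary: D rule: finite_induct)
  case empty
  then show ?case by simp
next
  case (insert x R)
  then have "[:-x, 1:] dvd D" by (simp add: poly_eq_0_iff_dvd)
  then obtain D' where D: "D = [:-x, 1:] * D'" by (rule dvdE)
  with insert have "\<forall>r\<in>R. poly D' r = 0" by auto
  with insert.IH have "(\<Prod>r\<in>R. [:-r, 1:]) dvd D'" by blast
  then show ?case using insert.hyps by (simp add: D)
qed

lemma peval_vanishing_on_eigenvalues:
  fixes A :: "('d::finite) sop"
  assumes h: "hermitian A" and van: "\<forall>r\<in>eigenvalues A. poly D r = 0"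
  shows "peval D A = mzero"
proof -
  obtain T where "D = (\<Prod>r\<in>eigenvalues A. [:-r, 1:]) * T"
    using prod_roots_dvd[OF eigenvalues_annihilate(1)[OF h] van] by (auto elim: dvdE)
  then show ?thesis by (simp add: peval_mult eigenvalues_annihilate(2)[OF h])
qed

definition lagrange_basis :: "complex set \<Rightarrow> complex \<Rightarrow> complex poly" where
  "lagrange_basis R e = smult (\<Prod>r\<in>R - {e}. 1 / (e - r)) (\<Prod>r\<in>R - {e}. [:-r, 1:])"

lemma poly_lagrange_basis:
  assumes "finite R" "e \<in> R" "r \<in> R"
  shows "poly (lagrange_basis R e) r = (if r = e then 1 else 0)"
proof (cases "r = e")
  case True
  have "poly (lagrange_basis R e) e = (\<Prod>r'\<in>R - {e}. 1 / (e - r')) * (\<Prod>r'\<in>R - {e}. e - r')"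
    by (simp add: lagrange_basis_def poly_prod)
  also have "\<dots> = (\<Prod>r'\<in>R - {e}. 1 / (e - r') * (e - r'))"
    by (simp only: prod.distrib)
  also have "\<dots> = 1" by (intro prod.neutral) auto
  finally show ?thesis using True by simp
next
  case False
  with assms have "(\<Prod>r'\<in>R - {e}. r - r') = 0" by (intro prod_zero) auto
  with False show ?thesis by (simp add: lagrange_basis_def poly_prod)
qed

lemma real_coeffs_prod:
  "(\<forall>x\<in>S. \<forall>n. coeff (f x) n \<in> \<real>) \<Longrightarrow> \<forall>n. coeff (\<Prod>x\<in>S. f x) n \<in> (\<real> :: complex set)"
  by (induction S rule: infinite_finite_induct) (simp_all add: coeff_1 coeff_mult)

lemma lagrange_basis_real_coeffs:
  assumes "\<forall>r\<in>R. r \<in> \<real>" "e \<in> \<real>"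
  shows "coeff (lagrange_basis R e) n \<in> \<real>"
proof -
  have "\<forall>n. coeff (\<Prod>r\<in>R - {e}. [:-r, 1:]) n \<in> \<real>"
    by (rule real_coeffs_prod) (use assms in \<open>simp add: coeff_pCons split: nat.split\<close>)
  moreover have "(\<Prod>r\<in>R - {e}. 1 / (e - r)) \<in> \<real>"
    using assms by (intro prod_in_Reals) auto
  ultimately show ?thesis by (simp add: lagrange_basis_def)
qed

lemma hermitian_peval:
  fixes A :: "('d::finite) sop"
  assumes h: "hermitian A"
  shows "(\<forall>n. coeff p n \<in> \<real>) \<Longrightarrow> hermitian (peval p A)"
proof (induction p)
  case 0
  then show ?case by (simp add: hermitian_def mzero_def)
next
  case (pCons a p)
  have "a \<in> \<real>" using pCons.prems[rule_format, of 0] by simp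
  have "hermitian (peval p A)"
    using pCons by (metis coeff_pCons_Suc)
  moreover have "mmul A (peval p A) = mmul (peval p A) A"
    using peval_commute[of "[:0, 1:]" A p] by (simp add: peval_x)
  ultimately have "hermitian (mmul A (peval p A))"
    using h by (simp add: op_adj_mmul hermitian_iff_op_adj)
  with \<open>a \<in> \<real>\<close> show ?case
    by (simp add: peval_pCons hermitian_madd hermitian_mscale_idm)
qed

definition lagrange_projector :: "('d::finite) sop \<Rightarrow> complex \<Rightarrow> 'd sop" where
  "lagrange_projector A e = peval (lagrange_basis (eigenvalues A) e) A"

lemma lagrange_projector_hermitian:
  assumes h: "hermitian A" and e: "e \<in> eigenvalues A"
  shows "hermitian (lagrange_projector A e)"
proof -
  have "\<forall>r\<in>eigenvalues A. r \<in> \<real>" using hermitian_eigenvalue_real[OF h] by blast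
  then have "\<forall>n. coeff (lagrange_basis (eigenvalues A) e) n \<in> \<real>"
    using lagrange_basis_real_coeffs hermitian_eigenvalue_real[OF h e] by blast
  then show ?thesis unfolding lagrange_projector_def by (rule hermitian_peval[OF h])
qed

lemma lagrange_projector_idempotent:
  assumes h: "hermitian A" and e: "e \<in> eigenvalues A"
  shows "mmul (lagrange_projector A e) (lagrange_projector A e) = lagrange_projector A e"
proof -
  let ?L = "lagrange_basis (eigenvalues A) e"
  have "peval (?L * ?L - ?L) A = mzero"
    by (rule peval_vanishing_on_eigenvalues[OF h])
      (simp add: poly_lagrange_basis[OF eigenvalues_annihilate(1)[OF h] e])
  then show ?thesis
    by (simp add: lagrange_projector_def fun_eq_iff peval_diff peval_mult[symmetric] mzero_def)
qed

lemma lagrange_projector_fixed_iff: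
  assumes h: "hermitian A" and e: "e \<in> eigenvalues A"
  shows "mvec (lagrange_projector A e) v = v \<longleftrightarrow> mvec A v = (\<lambda>i. e * v i)"
proof
  let ?L = "lagrange_basis (eigenvalues A) e"
  assume fixed: "mvec (lagrange_projector A e) v = v"
  have "peval ([:-e, 1:] * ?L) A = mzero"
    by (rule peval_vanishing_on_eigenvalues[OF h])
      (simp add: poly_lagrange_basis[OF eigenvalues_annihilate(1)[OF h] e])
  then have "mvec (peval [:-e, 1:] A) (mvec (lagrange_projector A e) v) = (\<lambda>i. 0)"
    unfolding lagrange_projector_def by (simp only: peval_mult[symmetric] mvec_mmul[symmetric] mvec_mzero)
  then show "mvec A v = (\<lambda>i. e * v i)"
    using fixed by (simp add: mvec_peval_linear fun_eq_iff)
next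
  assume "mvec A v = (\<lambda>i. e * v i)"
  from mvec_peval_eigenvector[OF this] show "mvec (lagrange_projector A e) v = v"
    by (simp add: lagrange_projector_def poly_lagrange_basis[OF eigenvalues_annihilate(1)[OF h] e e])
qed

lemma lagrange_projector_sum:
  fixes A :: "('d::finite) sop"
  assumes h: "hermitian A"
  shows "(\<Sum>e\<in>eigenvalues A. e * lagrange_projector A e i j) = A i j"
proof -
  let ?R = "eigenvalues A"
  have fin: "finite ?R" by (rule eigenvalues_annihilate(1)[OF h])
  let ?D = "(\<Sum>e\<in>?R. smult e (lagrange_basis ?R e)) - [:0, 1:]"
  have "\<forall>r\<in>?R. poly ?D r = 0"
  proof
    fix r assume r: "r \<in> ?R"
    have "poly ?D r = (\<Sum>e\<in>?R. e * (if r = e then 1 else 0)) - r"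
      using poly_lagrange_basis[OF fin _ r] by (simp add: poly_sum)
    also have "\<dots> = 0" using fin r by (simp add: if_distrib[of "\<lambda>z. _ * z"] cong: if_cong)
    finally show "poly ?D r = 0" .
  qed
  from peval_vanishing_on_eigenvalues[OF h this] have "peval ?D A i j = 0"
    by (simp add: mzero_def)
  then have "(\<Sum>e\<in>?R. peval (smult e (lagrange_basis ?R e)) A i j) - A i j = 0"
    by (simp add: peval_diff peval_sum[OF fin] peval_x)
  then show ?thesis by (simp add: peval_smult mscale_def lagrange_projector_def)
qed

lemma projector_unique:
  fixes P Q :: "('d::finite) sop"
  assumes hP: "hermitian P" and iP: "mmul P P = P" and hQ: "hermitian Q" and iQ: "mmul Q Q = Q"
    and fx: "\<And>v. mvec P v = v \<longleftrightarrow> mvec Q v = v"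
  shows "P = Q"
proof -
  have PQ: "mmul P Q = Q"
  proof (rule sop_eqI_mvec)
    fix v
    have "mvec Q (mvec Q v) = mvec Q v" by (simp add: mvec_mmul[symmetric] iQ)
    then show "mvec (mmul P Q) v = mvec Q v" using fx by (simp add: mvec_mmul)
  qed
  have QP: "mmul Q P = P"
  proof (rule sop_eqI_mvec)
    fix v
    have "mvec P (mvec P v) = mvec P v" by (simp add: mvec_mmul[symmetric] iP)
    then show "mvec (mmul Q P) v = mvec P v" using fx by (simp add: mvec_mmul)
  qed
  have "Q = op_adj (mmul P Q)" using hQ by (simp add: PQ hermitian_iff_op_adj)
  also have "\<dots> = mmul Q P" using hP hQ by (simp add: op_adj_mmul hermitian_iff_op_adj)
  finally show ?thesis by (simp add: QP)
qed

lemma spectral_projector_eq_lagrange_projector: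
  fixes A :: "('d::finite) sop"
  assumes h: "hermitian A" and e: "e \<in> eigenvalues A"
  shows "spectral_projector A e = lagrange_projector A e"
  unfolding spectral_projector_def
proof (rule the_equality)
  show "hermitian (lagrange_projector A e) \<and>
      mmul (lagrange_projector A e) (lagrange_projector A e) = lagrange_projector A e \<and>
      (\<forall>v. mvec (lagrange_projector A e) v = v \<longleftrightarrow> mvec A v = (\<lambda>i. e * v i))"
    using lagrange_projector_hermitian[OF h e] lagrange_projector_idempotent[OF h e]
      lagrange_projector_fixed_iff[OF h e] by blast
next
  fix Q assume Q: "hermitian Q \<and> mmul Q Q = Q \<and> (\<forall>v. mvec Q v = v \<longleftrightarrow> mvec A v = (\<lambda>i. e * v i))"
  show "Q = lagrange_projector A e"
    by (rule projector_unique)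
      (use Q lagrange_projector_hermitian[OF h e] lagrange_projector_idempotent[OF h e]
        lagrange_projector_fixed_iff[OF h e] in auto)
qed

theorem spectral_decomposition:
  fixes A :: "('d::finite) sop"
  assumes h: "hermitian A"
  shows "finite (eigenvalues A)" "(\<lambda>i j. \<Sum>e\<in>eigenvalues A. e * spectral_projector A e i j) = A"
  using eigenvalues_annihilate(1)[OF h] lagrange_projector_sum[OF h]
  by (simp_all add: spectral_projector_eq_lagrange_projector[OF h] fun_eq_iff)

section \<open>Completely positive maps\<close>

lemma double_sum_delta:
  fixes A :: "('d::finite) sop"
  shows "(\<Sum>x\<in>UNIV. \<Sum>y\<in>UNIV. (if x = i then c else 0) * A x y * (if y = j then e else 0)) = c * A i j * e"
proof -
  have "(\<Sum>y\<in>UNIV. (if x = i then c else 0) * A x y * (if y = j then e else 0))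
      = (if x = i then c * A x j * e else 0)" for x
    by (cases "x = i") (simp_all add: if_distrib[of "\<lambda>z. _ * z"] cong: if_cong)
  then show ?thesis by simp
qed

lemma quadratic_form_two_point:
  fixes A :: "('d::finite) sop"
  shows "(\<Sum>x\<in>UNIV. \<Sum>y\<in>UNIV. cnj ((if x = i then a else 0) + (if x = j then b else 0)) * A x y *
            ((if y = i then a else 0) + (if y = j then b else 0)))
       = cnj a * A i i * a + cnj a * A i j * b + cnj b * A j i * a + cnj b * A j j * b"
proof -
  have "cnj ((if x = i then a else 0) + (if x = j then b else 0))
      = (if x = i then cnj a else 0) + (if x = j then cnj b else 0)" for x
    by simp
  then show ?thesis
    by (simp only: distrib_left distrib_right sum.distrib double_sum_delta) (simp add: add_ac)
qed

lemma psd_hermitian: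
  fixes A :: "('d::finite) sop"
  assumes "psd_on UNIV A"
  shows "hermitian A"
  unfolding hermitian_def
proof (intro allI)
  fix i j
  have im: "Im (cnj a * A i i * a + cnj a * A i j * b + cnj b * A j i * a + cnj b * A j j * b) = 0"
    for a b
    using assms[unfolded psd_on_def, rule_format, of "\<lambda>x. (if x = i then a else 0) + (if x = j then b else 0)"]
    unfolding quadratic_form_two_point[symmetric] by blast
  have ii: "Im (A i i) = 0" using im[of 1 0] by simp
  have jj: "Im (A j j) = 0" using im[of 0 1] by simp
  have "Im (A i j) + Im (A j i) = 0" using im[of 1 1] ii jj by simp
  moreover have "Re (A i j) - Re (A j i) = 0" using im[of 1 \<i>] ii jj by (simp add: algebra_simps)
  ultimately show "A i j = cnj (A j i)" by (simp add: complex_eq_iff)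
qed

lemma psd_projector:
  fixes P :: "('d::finite) sop"
  assumes h: "hermitian P" and i: "mmul P P = P"
  shows "psd_on UNIV P"
  unfolding psd_on_def
proof (intro allI)
  fix v
  let ?w = "mvec P v"
  have "(\<Sum>x\<in>UNIV. \<Sum>y\<in>UNIV. cnj (v x) * P x y * v y) = (\<Sum>x\<in>UNIV. cnj (v x) * mvec P v x)"
    by (simp add: mvec_def sum_distrib_left mult.assoc)
  also have "\<dots> = (\<Sum>x\<in>UNIV. cnj (v x) * mvec P ?w x)"
    by (simp only: mvec_mmul[symmetric] i)
  also have "\<dots> = (\<Sum>x\<in>UNIV. cnj (mvec (op_adj P) v x) * ?w x)" by (rule inner_mvec_op_adj)
  also have "\<dots> = complex_of_real (\<Sum>x\<in>UNIV. (cmod (?w x))\<^sup>2)"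
    using h by (simp add: hermitian_iff_op_adj sum_cnj_mult_self)
  finally show "Im (\<Sum>x\<in>UNIV. \<Sum>y\<in>UNIV. cnj (v x) * P x y * v y) = 0 \<and>
      0 \<le> Re (\<Sum>x\<in>UNIV. \<Sum>y\<in>UNIV. cnj (v x) * P x y * v y)"
    by (simp add: sum_nonneg)
qed

lemma psd_on_trivial_ancilla:
  fixes Y :: "('d::finite) sop"
  shows "psd_on ({..<1::nat} \<times> UNIV) (\<lambda>(i, a) (j, b). Y a b) \<longleftrightarrow> psd_on UNIV Y"
proof -
  define Q where "Q w \<longleftrightarrow> Im (\<Sum>a\<in>UNIV. \<Sum>b\<in>UNIV. cnj (w a) * Y a b * w b) = 0 \<and>
      0 \<le> Re (\<Sum>a\<in>UNIV. \<Sum>b\<in>UNIV. cnj (w a) * Y a b * w b)" for w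
  have red: "(\<Sum>p\<in>{..<1::nat} \<times> UNIV. \<Sum>q\<in>{..<1::nat} \<times> UNIV. f p q)
      = (\<Sum>a\<in>UNIV. \<Sum>b\<in>UNIV. f (0, a) (0, b))" for f :: "nat \<times> 'd \<Rightarrow> nat \<times> 'd \<Rightarrow> complex"
    by (simp add: sum.cartesian_product' lessThan_Suc)
  have "psd_on ({..<1::nat} \<times> UNIV) (\<lambda>(i, a) (j, b). Y a b) \<longleftrightarrow> (\<forall>v. Q (\<lambda>a. v (0::nat, a)))"
    unfolding psd_on_def Q_def by (simp only: red prod.case)
  also have "\<dots> \<longleftrightarrow> (\<forall>w. Q w)"
  proof (intro iffI allI)
    fix w assume "\<forall>v. Q (\<lambda>a. v (0::nat, a))"
    from this[rule_format, of "\<lambda>p. w (snd p)"] show "Q w" by simp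
  qed simp
  finally show ?thesis unfolding psd_on_def Q_def .
qed

lemma completely_positive_psd:
  fixes E :: "('d::finite) sop \<Rightarrow> 'd sop"
  assumes cp: "completely_positive E" and X: "psd_on UNIV X"
  shows "psd_on UNIV (E X)"
proof -
  have "psd_on ({..<1::nat} \<times> UNIV) (\<lambda>(i, a) (j, b). X a b)"
    using X by (simp only: psd_on_trivial_ancilla)
  then have "psd_on ({..<1::nat} \<times> UNIV)
      (\<lambda>(i, a) (j, b). E (\<lambda>a' b'. (\<lambda>(i, a) (j, b). X a b) (i, a') (j, b')) a b)"
    by (rule cp[unfolded completely_positive_def, rule_format])
  then show ?thesis by (simp only: prod.case psd_on_trivial_ancilla)
qed

lemma hermitian_real_combination:
  assumes "\<forall>x\<in>S. c x \<in> \<real> \<and> hermitian (B x)"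
  shows "hermitian (\<lambda>i j. \<Sum>x\<in>S. c x * B x i j)"
  unfolding hermitian_def
proof (intro allI)
  fix i j
  have "cnj (c x) * cnj (B x j i) = c x * B x i j" if "x \<in> S" for x
    using assms that Reals_cnj_iff unfolding hermitian_def by metis
  then show "(\<Sum>x\<in>S. c x * B x i j) = cnj (\<Sum>x\<in>S. c x * B x j i)"
    by (simp add: cnj_sum)
qed

text \<open>Spectral projectors are positive, so their images under a completely positive map are
  positive and hence Hermitian.\<close>
lemma cp_hermitian:
  fixes E :: "('d::finite) sop \<Rightarrow> 'd sop"
  assumes lin: "clinear_map E" and cp: "completely_positive E" and h: "hermitian A"
  shows "hermitian (E A)"
proof -
  have "E A = (\<lambda>i j. \<Sum>e\<in>eigenvalues A. e * E (spectral_projector A e) i j)"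
    by (subst (1) spectral_decomposition(2)[OF h, symmetric])
      (rule clinear_map_sum[OF lin spectral_decomposition(1)[OF h]])
  moreover have "\<forall>e\<in>eigenvalues A. e \<in> \<real> \<and> hermitian (E (spectral_projector A e))"
  proof
    fix e assume e: "e \<in> eigenvalues A"
    have "psd_on UNIV (spectral_projector A e)"
      using lagrange_projector_hermitian[OF h e] lagrange_projector_idempotent[OF h e]
      by (simp add: spectral_projector_eq_lagrange_projector[OF h e] psd_projector)
    then show "e \<in> \<real> \<and> hermitian (E (spectral_projector A e))"
      using hermitian_eigenvalue_real[OF h e] psd_hermitian completely_positive_psd[OF cp] by blast
  qed
  ultimately show ?thesis by (simp add: hermitian_real_combination)
qed

lemma cp_op_adj:
  fixes E :: "('d::finite) sop \<Rightarrow> 'd sop"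
  assumes lin: "clinear_map E" and cp: "completely_positive E"
  shows "E (op_adj A) = op_adj (E A)"
proof -
  define H1 where "H1 = (\<lambda>i j. (A i j + cnj (A j i)) / 2)"
  define H2 where "H2 = (\<lambda>i j. (A i j - cnj (A j i)) / (2 * \<i>))"
  have "hermitian H1" unfolding hermitian_def H1_def by (simp add: add.commute)
  moreover have "hermitian H2" unfolding hermitian_def H2_def by (simp add: field_simps)
  ultimately have herm: "hermitian (E H1)" "hermitian (E H2)" by (simp_all add: cp_hermitian[OF lin cp])
  have "A = (\<lambda>i j. H1 i j + \<i> * H2 i j)" "op_adj A = (\<lambda>i j. H1 i j + (- \<i>) * H2 i j)"
    by (simp_all add: fun_eq_iff op_adj_def H1_def H2_def field_simps)
  then have EA: "E A = (\<lambda>i j. E H1 i j + \<i> * E H2 i j)"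
    and EA': "E (op_adj A) = (\<lambda>i j. E H1 i j + (- \<i>) * E H2 i j)"
    using lin unfolding clinear_map_def by metis+
  show ?thesis
  proof (intro ext)
    fix i j
    have "E H1 i j = cnj (E H1 j i)" "E H2 i j = cnj (E H2 j i)"
      using herm unfolding hermitian_def by blast+
    then show "E (op_adj A) i j = op_adj (E A) i j"
      unfolding EA EA' op_adj_def by simp
  qed
qed


lemma sandwich_chain_cong:
  "(\<And>k. k \<le> n \<Longrightarrow> L k = L' k) \<Longrightarrow> (\<And>k. k \<le> n \<Longrightarrow> R k = R' k) \<Longrightarrow>
   sandwich_chain \<rho> E L R n = sandwich_chain \<rho> E L' R' n"
  by (induction n) auto

lemma sandwich_chain_fun_upd_beyond [simp]:
  "n < k \<Longrightarrow> sandwich_chain \<rho> E (L(k := A)) R n = sandwich_chain \<rho> E L R n"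
  "n < k \<Longrightarrow> sandwich_chain \<rho> E L (R(k := A)) n = sandwich_chain \<rho> E L R n"
  by (auto intro: sandwich_chain_cong)

lemma clinear_sandwich_chain_ket:
  assumes "\<forall>j\<in>{1..n}. clinear_map (E j)" and "k \<le> n"
  shows "clinear_map (\<lambda>A. sandwich_chain \<rho> E (L(k := A)) R n)"
  using assms
proof (induction n)
  case 0
  then show ?case by (simp add: clinear_map_mmul_left)
next
  case (Suc n)
  show ?case
  proof (cases "k = Suc n")
    case True
    have "(\<lambda>A. sandwich_chain \<rho> E (L(Suc n := A)) R (Suc n)) =
        (\<lambda>A. mmul A (mmul (E (Suc n) (sandwich_chain \<rho> E L R n)) (R (Suc n))))"
      by (simp only: sandwich_chain.simps fun_upd_same sandwich_chain_fun_upd_beyond lessI)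
    then show ?thesis unfolding True by (simp only: clinear_map_mmul_left)
  next
    case False
    then have "(\<lambda>A. sandwich_chain \<rho> E (L(k := A)) R (Suc n)) = (\<lambda>X. mmul (L (Suc n)) X) \<circ>
        (\<lambda>X. mmul X (R (Suc n))) \<circ> E (Suc n) \<circ> (\<lambda>A. sandwich_chain \<rho> E (L(k := A)) R n)"
      by (simp add: fun_eq_iff)
    moreover have "clinear_map (\<lambda>A. sandwich_chain \<rho> E (L(k := A)) R n)"
      by (rule Suc.IH) (use Suc.prems False in auto)
    moreover have "clinear_map (E (Suc n))"
      using Suc.prems by simp
    ultimately show ?thesis
      by (simp only: clinear_map_comp clinear_map_mmul_left clinear_map_mmul_right)
  qed
qed

lemma clinear_sandwich_chain_bra:
  assumes "\<forall>j\<in>{1..n}. clinear_map (E j)" and "k \<le> n"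
  shows "clinear_map (\<lambda>A. sandwich_chain \<rho> E L (R(k := A)) n)"
  using assms
proof (induction n)
  case 0
  have "(\<lambda>A. sandwich_chain \<rho> E L (R(0 := A)) 0) = (\<lambda>X. mmul (L 0) X) \<circ> (\<lambda>X. mmul \<rho> X)"
    by (simp add: fun_eq_iff)
  with 0 show ?case by (auto intro!: clinear_map_comp clinear_map_mmul_right)
next
  case (Suc n)
  show ?case
  proof (cases "k = Suc n")
    case True
    have "(\<lambda>A. sandwich_chain \<rho> E L (R(Suc n := A)) (Suc n)) =
        (\<lambda>X. mmul (L (Suc n)) X) \<circ> (\<lambda>X. mmul (E (Suc n) (sandwich_chain \<rho> E L R n)) X)"
      by (simp only: sandwich_chain.simps fun_upd_same sandwich_chain_fun_upd_beyond lessI comp_def)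
    then show ?thesis
      unfolding True by (simp only: clinear_map_comp clinear_map_mmul_right)
  next
    case False
    then have "(\<lambda>A. sandwich_chain \<rho> E L (R(k := A)) (Suc n)) = (\<lambda>X. mmul (L (Suc n)) X) \<circ>
        (\<lambda>X. mmul X (R (Suc n))) \<circ> E (Suc n) \<circ> (\<lambda>A. sandwich_chain \<rho> E L (R(k := A)) n)"
      by (simp add: fun_eq_iff)
    moreover have "clinear_map (\<lambda>A. sandwich_chain \<rho> E L (R(k := A)) n)"
      by (rule Suc.IH) (use Suc.prems False in auto)
    moreover have "clinear_map (E (Suc n))"
      using Suc.prems by simp
    ultimately show ?thesis
      by (simp only: clinear_map_comp clinear_map_mmul_left clinear_map_mmul_right)
  qed
qed

lemma multilinear_QKD_ket:
  assumes "\<forall>j\<in>{1..n}. clinear_map (E j)"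
  shows "multilinear (Suc n) (\<lambda>P. QKD_doubled \<rho> E n P R)"
  unfolding multilinear_def QKD_doubled_def
proof (intro conjI allI impI)
  show "clinear_functional (\<lambda>A. mtr (sandwich_chain \<rho> E (P(k := A)) R n))" if "k < Suc n" for k P
    using assms that by (auto intro!: clinear_functional_mtr_comp clinear_sandwich_chain_ket)
  show "mtr (sandwich_chain \<rho> E P R n) = mtr (sandwich_chain \<rho> E P' R n)"
    if "\<forall>k<Suc n. P k = P' k" for P P'
    using that by (auto intro!: arg_cong[where f = mtr] sandwich_chain_cong)
qed

lemma multilinear_QKD_bra:
  assumes "\<forall>j\<in>{1..n}. clinear_map (E j)"
  shows "multilinear (Suc n) (\<lambda>P. QKD_doubled \<rho> E n L P)"
  unfolding multilinear_def QKD_doubled_def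
proof (intro conjI allI impI)
  show "clinear_functional (\<lambda>A. mtr (sandwich_chain \<rho> E L (P(k := A)) n))" if "k < Suc n" for k P
    using assms that by (auto intro!: clinear_functional_mtr_comp clinear_sandwich_chain_bra)
  show "mtr (sandwich_chain \<rho> E L P n) = mtr (sandwich_chain \<rho> E L P' n)"
    if "\<forall>k<Suc n. P k = P' k" for P P'
    using that by (auto intro!: arg_cong[where f = mtr] sandwich_chain_cong)
qed

lemma op_adj_sandwich_chain:
  fixes \<rho> :: "('d::finite) sop"
  assumes adj: "\<forall>k\<in>{1..n}. \<forall>A. E k (op_adj A) = op_adj (E k A)" and h: "hermitian \<rho>"
  shows "op_adj (sandwich_chain \<rho> E L R n) = sandwich_chain \<rho> E (\<lambda>k. op_adj (R k)) (\<lambda>k. op_adj (L k)) n"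
  using adj
proof (induction n)
  case 0
  have "op_adj \<rho> = \<rho>" using h by (simp add: hermitian_iff_op_adj)
  then show ?case by (simp add: op_adj_mmul mmul_assoc)
next
  case (Suc n)
  have IH: "op_adj (sandwich_chain \<rho> E L R n) = sandwich_chain \<rho> E (\<lambda>k. op_adj (R k)) (\<lambda>k. op_adj (L k)) n"
    using Suc by auto
  have "E (Suc n) (op_adj (sandwich_chain \<rho> E L R n)) = op_adj (E (Suc n) (sandwich_chain \<rho> E L R n))"
    using Suc.prems by auto
  then show ?case by (simp add: op_adj_mmul mmul_assoc IH)
qed

lemma cnj_QKD_doubled:
  fixes \<rho> :: "('d::finite) sop"
  assumes adj: "\<forall>k\<in>{1..n}. \<forall>A. E k (op_adj A) = op_adj (E k A)" and h: "hermitian \<rho>"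
  shows "cnj (QKD_doubled \<rho> E n L R) = QKD_doubled \<rho> E n (\<lambda>k. op_adj (R k)) (\<lambda>k. op_adj (L k))"
proof -
  have "cnj (QKD_doubled \<rho> E n L R) = mtr (op_adj (sandwich_chain \<rho> E L R n))"
    by (simp add: QKD_doubled_def mtr_def op_adj_def)
  then show ?thesis by (simp add: op_adj_sandwich_chain[OF adj h] QKD_doubled_def)
qed

lemma sandwich_chain_idle:
  assumes "\<forall>t. a < t \<and> t \<le> a + l \<longrightarrow> L t = idm \<and> R t = idm"
  shows "sandwich_chain \<rho> E L R (a + l) = chan_seq E a l (sandwich_chain \<rho> E L R a)"
  using assms by (induction l) simp_all

lemma sandwich_chain_idle_gap:
  assumes "a < b" and "\<And>t. a < t \<Longrightarrow> t < b \<Longrightarrow> L t = idm \<and> R t = idm"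
  shows "sandwich_chain \<rho> E L R b = mmul (L b) (mmul (chan_seq E a (b - a) (sandwich_chain \<rho> E L R a)) (R b))"
proof -
  obtain l where b: "b = Suc (a + l)" using less_imp_Suc_add[OF assms(1)] by blast
  have "sandwich_chain \<rho> E L R (a + l) = chan_seq E a l (sandwich_chain \<rho> E L R a)"
    by (rule sandwich_chain_idle) (use assms b in auto)
  then show ?thesis using b by simp
qed

lemma sandwich_chain_idle_prefix:
  assumes "\<forall>t<k. L t = idm \<and> R t = idm"
  shows "sandwich_chain \<rho> E L R k = mmul (L k) (mmul (chan_seq E 0 k \<rho>) (R k))"
proof (cases k)
  case (Suc k')
  have "sandwich_chain \<rho> E L R (0 + k') = chan_seq E 0 k' (sandwich_chain \<rho> E L R 0)"
    by (rule sandwich_chain_idle) (use assms Suc in auto)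
  then show ?thesis using assms Suc by simp
qed simp

lemma mtr_chan_seq:
  assumes "\<forall>t. a < t \<and> t \<le> a + l \<longrightarrow> trace_preserving (E t)"
  shows "mtr (chan_seq E a l X) = mtr X"
  using assms by (induction l) (auto simp: trace_preserving_def)

lemma mtr_sandwich_chain_idle_tail:
  assumes "a \<le> n" and "\<forall>t. a < t \<and> t \<le> n \<longrightarrow> L t = idm \<and> R t = idm"
    and "\<forall>t. a < t \<and> t \<le> n \<longrightarrow> trace_preserving (E t)"
  shows "mtr (sandwich_chain \<rho> E L R n) = mtr (sandwich_chain \<rho> E L R a)"
proof -
  have n: "n = a + (n - a)" using assms by simp
  have "sandwich_chain \<rho> E L R n = chan_seq E a (n - a) (sandwich_chain \<rho> E L R a)"
    by (subst n, rule sandwich_chain_idle) (use assms in auto)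
  then show ?thesis using mtr_chan_seq[of a "n - a" E] assms by simp
qed

lemma sorted_wrt_gap_notin:
  fixes ts :: "nat list"
  assumes s: "sorted_wrt (<) ts" and j: "Suc j < length ts" and t: "ts!j < t" "t < ts!(Suc j)"
  shows "t \<notin> set ts"
proof
  assume "t \<in> set ts"
  then obtain i where i: "i < length ts" "ts!i = t" by (auto simp: in_set_conv_nth)
  have sorted: "sorted ts" using s by (simp add: strict_sorted_iff)
  consider "i \<le> j" | "Suc j \<le> i" by linarith
  then show False
    using sorted_nth_mono[OF sorted, of i j] sorted_nth_mono[OF sorted, of "Suc j" i] i j t
    by cases auto
qed

lemma sandwich_chain_sub_process:
  assumes t0: "ts!0 = 0" and s: "sorted_wrt (<) ts"
    and idm: "\<forall>t. t \<notin> set ts \<longrightarrow> L t = idm \<and> R t = idm"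
  shows "j < length ts \<Longrightarrow>
    sandwich_chain \<rho> E L R (ts!j) = sandwich_chain \<rho> (sub_channels E ts) (\<lambda>j. L (ts!j)) (\<lambda>j. R (ts!j)) j"
proof (induction j)
  case 0
  then show ?case using t0 by simp
next
  case (Suc j)
  have "ts!j < ts!Suc j" using s Suc.prems by (simp add: sorted_wrt_iff_nth_less)
  then have "sandwich_chain \<rho> E L R (ts!Suc j) = mmul (L (ts!Suc j))
      (mmul (chan_seq E (ts!j) (ts!Suc j - ts!j) (sandwich_chain \<rho> E L R (ts!j))) (R (ts!Suc j)))"
    by (rule sandwich_chain_idle_gap) (use sorted_wrt_gap_notin[OF s Suc.prems] idm in blast)
  then show ?case using Suc by (simp add: sub_channels_def)
qed

lemma QKD_doubled_sub_process:
  assumes ne: "ts \<noteq> []" and t0: "ts!0 = 0" and s: "sorted_wrt (<) ts" and le: "\<forall>t\<in>set ts. t \<le> n"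
    and idm: "\<forall>t. t \<notin> set ts \<longrightarrow> L t = idm \<and> R t = idm"
    and restr: "\<And>j. j < length ts \<Longrightarrow> L (ts!j) = L' j \<and> R (ts!j) = R' j"
    and tp: "\<forall>t\<in>{1..n}. trace_preserving (E t)"
  shows "QKD_doubled \<rho> E n L R = QKD_doubled \<rho> (sub_channels E ts) (length ts - 1) L' R'"
proof -
  let ?l = "length ts - 1"
  have l: "?l < length ts" using ne by simp
  have notin: "t \<notin> set ts" if "ts!?l < t" for t
  proof
    assume "t \<in> set ts"
    then obtain i where i: "i < length ts" "ts!i = t" by (auto simp: in_set_conv_nth)
    have "sorted ts" using s by (simp add: strict_sorted_iff)
    with i have "ts!i \<le> ts!?l" by (intro sorted_nth_mono) auto
    with that i show False by simp
  qed
  have "mtr (sandwich_chain \<rho> E L R n) = mtr (sandwich_chain \<rho> E L R (ts!?l))"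
    by (rule mtr_sandwich_chain_idle_tail) (use l le notin idm tp in auto)
  also have "sandwich_chain \<rho> E L R (ts!?l) = sandwich_chain \<rho> (sub_channels E ts) L' R' ?l"
    unfolding sandwich_chain_sub_process[OF t0 s idm l]
    by (rule sandwich_chain_cong) (use restr l in auto)
  finally show ?thesis by (simp add: QKD_doubled_def)
qed

lemma clinear_chan_seq:
  assumes "\<forall>t. a < t \<and> t \<le> a + l \<longrightarrow> clinear_map (E t)"
  shows "clinear_map (chan_seq E a l)"
  using assms by (induction l) (auto intro: clinear_map_comp clinear_map_id)

lemma clinear_sub_channels:
  assumes s: "sorted_wrt (<) ts" and le: "\<forall>t\<in>set ts. t \<le> n"
    and lin: "\<forall>t\<in>{1..n}. clinear_map (E t)"
  shows "\<forall>j\<in>{1..length ts - 1}. clinear_map (sub_channels E ts j)"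
proof
  fix j assume j: "j \<in> {1..length ts - 1}"
  then have "ts!(j - 1) < ts!j" "ts!j \<le> n"
    using s le by (auto simp: sorted_wrt_iff_nth_less)
  then show "clinear_map (sub_channels E ts j)"
    unfolding sub_channels_def by (intro clinear_chan_seq) (use lin in auto)
qed

section \<open>Temporal states as quasiprobabilities of matrix units\<close>

text \<open>The \<open>d\<^sup>2\<close> Pauli operators, read as vectors in \<open>\<complex>\<^sup>d\<^sup>\<times>\<^sup>d\<close>, are orthogonal; so the matrix with these
  rows is invertible, and the orthogonality of its columns is the completeness relation.\<close>
lemma gen_pauli_completeness:
  fixes \<sigma> :: "nat \<Rightarrow> ('d::finite) sop"
  assumes pauli: "gen_pauli \<sigma>"
  shows "(\<Sum>\<mu><CARD('d)^2. \<sigma> \<mu> a b * \<sigma> \<mu> x y) = (if a = y \<and> b = x then of_nat CARD('d) else 0)"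
proof -
  let ?d = "of_nat CARD('d) :: complex"
  have "card (UNIV :: ('d \<times> 'd) set) = card {..<CARD('d)^2}"
    by (simp add: power2_eq_square)
  then obtain g where g: "bij_betw g (UNIV :: ('d \<times> 'd) set) {..<CARD('d)^2}"
    using finite_same_card_bij[of "UNIV :: ('d \<times> 'd) set" "{..<CARD('d)^2}"] by auto
  then have g_eq: "g p = g p' \<longleftrightarrow> p = p'" and g_less: "g p < CARD('d)^2" for p p'
    unfolding bij_betw_def inj_on_def by blast+
  define M :: "complex^('d \<times> 'd)^('d \<times> 'd)" where "M = (\<chi> p q. \<sigma> (g p) (fst q) (snd q))"
  define N :: "complex^('d \<times> 'd)^('d \<times> 'd)" where "N = (\<chi> q p. \<sigma> (g p) (snd q) (fst q) / ?d)"
  have orth: "mtr (mmul (\<sigma> \<mu>) (\<sigma> \<nu>)) = (if \<mu> = \<nu> then ?d else 0)"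
    if "\<mu> < CARD('d)^2" "\<nu> < CARD('d)^2" for \<mu> \<nu>
    using pauli that unfolding gen_pauli_def by blast
  note sum_pairs = sum.cartesian_product'[of _ UNIV UNIV, unfolded UNIV_Times_UNIV]
  have "(M ** N) $ p $ p' = mtr (mmul (\<sigma> (g p)) (\<sigma> (g p'))) / ?d" for p p'
    by (simp add: matrix_matrix_mult_def M_def N_def mtr_def mmul_def sum_pairs sum_divide_distrib)
  then have "M ** N = mat 1"
    by (simp add: vec_eq_iff mat_def orth[OF g_less g_less] g_eq)
  then have "N ** M = mat 1"
    by (rule matrix_left_right_inverse[THEN iffD1])
  moreover have "(N ** M) $ (b, a) $ (x, y) = (\<Sum>p\<in>UNIV. \<sigma> (g p) a b * \<sigma> (g p) x y) / ?d"
    by (simp add: matrix_matrix_mult_def M_def N_def sum_divide_distrib)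
  moreover have "(\<Sum>p\<in>UNIV. \<sigma> (g p) a b * \<sigma> (g p) x y) = (\<Sum>\<mu><CARD('d)^2. \<sigma> \<mu> a b * \<sigma> \<mu> x y)"
    by (rule sum.reindex_bij_betw[OF g])
  ultimately have "(\<Sum>\<mu><CARD('d)^2. \<sigma> \<mu> a b * \<sigma> \<mu> x y) / ?d = (if (b, a) = (x, y) then 1 else 0)"
    by (simp add: mat_def)
  then show ?thesis by (auto simp: divide_eq_eq split: if_splits)
qed

lemma gen_pauli_hermitian:
  assumes "gen_pauli \<sigma>" "\<mu>s \<in> pauli_idx CARD('d) m" "k < m"
  shows "hermitian (\<sigma> (\<mu>s!k) :: ('d::finite) sop)"
  using assms by (simp add: gen_pauli_def pauli_idx_def)

lemma QKD_right_eq_doubled: "QKD_right \<rho> E n P = QKD_doubled \<rho> E n (\<lambda>_. idm) P"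
  by (simp add: QKD_right_def QKD_doubled_def)

lemma QKD_left_eq_doubled: "QKD_left \<rho> E n P = QKD_doubled \<rho> E n P (\<lambda>_. idm)"
  by (simp add: QKD_left_def QKD_doubled_def)

lemma spectral_expansion:
  fixes F :: "(nat \<Rightarrow> ('d::finite) sop) \<Rightarrow> complex"
  assumes F: "multilinear m F" and herm: "\<And>k. k < m \<Longrightarrow> hermitian (A k)"
  shows "(\<Sum>as\<in>outcome_lists (\<lambda>k. eigenvalues (A k)) m.
            (\<Prod>k<m. as!k) * F (\<lambda>k. spectral_projector (A k) (as!k))) = F A"
proof -
  have "F A = F (\<lambda>k i j. \<Sum>e\<in>eigenvalues (A k). e * spectral_projector (A k) e i j)"
    by (rule multilinear_cong[OF F]) (simp add: spectral_decomposition(2)[OF herm])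
  also have "\<dots> = (\<Sum>as\<in>outcome_lists (\<lambda>k. eigenvalues (A k)) m.
            (\<Prod>k<m. as!k) * F (\<lambda>k. spectral_projector (A k) (as!k)))"
    by (rule multilinear_expansion[OF F]) (simp add: spectral_decomposition(1)[OF herm])
  finally show ?thesis ..
qed

text \<open>Completeness of the Pauli basis expands a matrix unit as
  \<open>|y\<rangle>\<langle>x| = d\<^sup>-\<^sup>1 \<Sum>\<^sub>\<mu> \<sigma>\<^sub>\<mu>(x, y) \<sigma>\<^sub>\<mu>\<close>; multilinearity turns this into the Pauli expansion
  of the temporal states.\<close>
lemma pauli_expansion:
  fixes F :: "(nat \<Rightarrow> ('d::finite) sop) \<Rightarrow> complex"
  assumes pauli: "gen_pauli \<sigma>" and F: "multilinear m F"
  shows "1 / of_nat CARD('d) ^ m * (\<Sum>\<mu>s\<in>pauli_idx CARD('d) m.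
           F (\<lambda>k. \<sigma> (\<mu>s!k)) * tensor m (\<lambda>k. \<sigma> (\<mu>s!k)) xs ys) = F (munits ys xs)"
proof -
  let ?d = "of_nat CARD('d) :: complex"
  have "munits ys xs = (\<lambda>k i j. \<Sum>\<mu>\<in>{..<CARD('d)^2}. \<sigma> \<mu> (xs!k) (ys!k) / ?d * \<sigma> \<mu> i j)"
  proof (intro ext)
    fix k i j
    have "(\<Sum>\<mu>\<in>{..<CARD('d)^2}. \<sigma> \<mu> (xs!k) (ys!k) / ?d * \<sigma> \<mu> i j)
        = (\<Sum>\<mu>\<in>{..<CARD('d)^2}. \<sigma> \<mu> (xs!k) (ys!k) * \<sigma> \<mu> i j) / ?d"
      by (simp add: sum_divide_distrib)
    also have "\<dots> = munits ys xs k i j"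
      by (auto simp: gen_pauli_completeness[OF pauli] munits_def munit_def)
    finally show "munits ys xs k i j = (\<Sum>\<mu>\<in>{..<CARD('d)^2}. \<sigma> \<mu> (xs!k) (ys!k) / ?d * \<sigma> \<mu> i j)" ..
  qed
  then have "F (munits ys xs) = (\<Sum>\<mu>s\<in>pauli_idx CARD('d) m.
      (\<Prod>k<m. \<sigma> (\<mu>s!k) (xs!k) (ys!k) / ?d) * F (\<lambda>k. \<sigma> (\<mu>s!k)))"
    unfolding pauli_idx_eq_outcome_lists by (simp only:) (rule multilinear_expansion[OF F], simp)
  also have "\<dots> = 1 / ?d ^ m * (\<Sum>\<mu>s\<in>pauli_idx CARD('d) m.
      F (\<lambda>k. \<sigma> (\<mu>s!k)) * tensor m (\<lambda>k. \<sigma> (\<mu>s!k)) xs ys)"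
    by (simp add: tensor_def prod_dividef sum_divide_distrib mult.commute)
  finally show ?thesis ..
qed

lemma KD_state_right_eq:
  fixes \<rho> :: "('d::finite) sop"
  assumes lin: "\<forall>j\<in>{1..n}. clinear_map (E j)" and pauli: "gen_pauli \<sigma>"
  shows "KD_state_right \<sigma> \<rho> E n xs ys = QKD_doubled \<rho> E n (\<lambda>_. idm) (munits ys xs)"
proof -
  have "corr_right \<sigma> \<rho> E n \<mu>s = QKD_doubled \<rho> E n (\<lambda>_. idm) (\<lambda>k. \<sigma> (\<mu>s!k))"
    if "\<mu>s \<in> pauli_idx CARD('d) (Suc n)" for \<mu>s
    unfolding corr_right_def QKD_right_eq_doubled
    by (rule spectral_expansion[OF multilinear_QKD_bra[OF lin] gen_pauli_hermitian[OF pauli that]])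
  then have "KD_state_right \<sigma> \<rho> E n xs ys = 1 / of_nat CARD('d) ^ Suc n * (\<Sum>\<mu>s\<in>pauli_idx CARD('d) (Suc n).
      QKD_doubled \<rho> E n (\<lambda>_. idm) (\<lambda>k. \<sigma> (\<mu>s!k)) * tensor (Suc n) (\<lambda>k. \<sigma> (\<mu>s!k)) xs ys)"
    unfolding KD_state_right_def by (intro arg_cong2[where f = "(*)"] refl sum.cong) simp_all
  then show ?thesis
    by (simp only: pauli_expansion[OF pauli multilinear_QKD_bra[OF lin]])
qed

lemma KD_state_left_eq:
  fixes \<rho> :: "('d::finite) sop"
  assumes lin: "\<forall>j\<in>{1..n}. clinear_map (E j)" and pauli: "gen_pauli \<sigma>"
  shows "KD_state_left \<sigma> \<rho> E n xs ys = QKD_doubled \<rho> E n (munits ys xs) (\<lambda>_. idm)"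
proof -
  have "corr_left \<sigma> \<rho> E n \<mu>s = QKD_doubled \<rho> E n (\<lambda>k. \<sigma> (\<mu>s!k)) (\<lambda>_. idm)"
    if "\<mu>s \<in> pauli_idx CARD('d) (Suc n)" for \<mu>s
    unfolding corr_left_def QKD_left_eq_doubled
    by (rule spectral_expansion[OF multilinear_QKD_ket[OF lin] gen_pauli_hermitian[OF pauli that]])
  then have "KD_state_left \<sigma> \<rho> E n xs ys = 1 / of_nat CARD('d) ^ Suc n * (\<Sum>\<mu>s\<in>pauli_idx CARD('d) (Suc n).
      QKD_doubled \<rho> E n (\<lambda>k. \<sigma> (\<mu>s!k)) (\<lambda>_. idm) * tensor (Suc n) (\<lambda>k. \<sigma> (\<mu>s!k)) xs ys)"
    unfolding KD_state_left_def by (intro arg_cong2[where f = "(*)"] refl sum.cong) simp_all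
  then show ?thesis
    by (simp only: pauli_expansion[OF pauli multilinear_QKD_ket[OF lin]])
qed

lemma corr_doubled_eq:
  fixes \<rho> :: "('d::finite) sop"
  assumes lin: "\<forall>j\<in>{1..n}. clinear_map (E j)" and pauli: "gen_pauli \<sigma>"
    and \<mu>s: "\<mu>s \<in> pauli_idx CARD('d) (Suc n)" and \<nu>s: "\<nu>s \<in> pauli_idx CARD('d) (Suc n)"
  shows "corr_doubled \<sigma> \<rho> E n \<mu>s \<nu>s = QKD_doubled \<rho> E n (\<lambda>k. \<sigma> (\<mu>s!k)) (\<lambda>k. \<sigma> (\<nu>s!k))"
proof -
  let ?SP = "\<lambda>\<mu>s as k. spectral_projector (\<sigma> (\<mu>s!k)) (as!k)"
  have "corr_doubled \<sigma> \<rho> E n \<mu>s \<nu>s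
      = (\<Sum>as\<in>outcome_lists (\<lambda>k. eigenvalues (\<sigma> (\<mu>s!k))) (Suc n). (\<Prod>k<Suc n. as!k) *
          (\<Sum>bs\<in>outcome_lists (\<lambda>k. eigenvalues (\<sigma> (\<nu>s!k))) (Suc n).
             (\<Prod>k<Suc n. bs!k) * QKD_doubled \<rho> E n (?SP \<mu>s as) (?SP \<nu>s bs)))"
    unfolding corr_doubled_def by (simp add: sum_distrib_left mult.assoc)
  also have "\<dots> = (\<Sum>as\<in>outcome_lists (\<lambda>k. eigenvalues (\<sigma> (\<mu>s!k))) (Suc n).
      (\<Prod>k<Suc n. as!k) * QKD_doubled \<rho> E n (?SP \<mu>s as) (\<lambda>k. \<sigma> (\<nu>s!k)))"
    by (intro sum.cong refl arg_cong2[where f = "(*)"]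
        spectral_expansion[OF multilinear_QKD_bra[OF lin] gen_pauli_hermitian[OF pauli \<nu>s]])
  also have "\<dots> = QKD_doubled \<rho> E n (\<lambda>k. \<sigma> (\<mu>s!k)) (\<lambda>k. \<sigma> (\<nu>s!k))"
    by (rule spectral_expansion[OF multilinear_QKD_ket[OF lin] gen_pauli_hermitian[OF pauli \<mu>s]])
  finally show ?thesis .
qed

lemma KD_state_doubled_eq:
  fixes \<rho> :: "('d::finite) sop"
  assumes lin: "\<forall>j\<in>{1..n}. clinear_map (E j)" and pauli: "gen_pauli \<sigma>"
  shows "KD_state_doubled \<sigma> \<rho> E n (xl, xr) (yl, yr) =
         QKD_doubled \<rho> E n (munits yl xl) (munits yr xr)"
proof -
  let ?c = "1 / of_nat CARD('d) ^ Suc n :: complex"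
  let ?P = "pauli_idx CARD('d) (Suc n)"
  let ?S = "\<lambda>\<mu>s k. \<sigma> (\<mu>s!k)"
  have c2: "(1 / of_nat CARD('d) ^ (2 * Suc n) :: complex) = ?c * ?c"
    by (simp add: mult_2 power_add)
  have "KD_state_doubled \<sigma> \<rho> E n (xl, xr) (yl, yr) = ?c * ?c * (\<Sum>\<mu>s\<in>?P. \<Sum>\<nu>s\<in>?P.
      QKD_doubled \<rho> E n (?S \<mu>s) (?S \<nu>s) * tensor (Suc n) (?S \<nu>s) xr yr * tensor (Suc n) (?S \<mu>s) xl yl)"
    unfolding KD_state_doubled_def tensor2_def prod.case c2
    by (rule arg_cong2[where f = "(*)"], rule refl, intro sum.cong refl)
      (simp add: corr_doubled_eq[OF lin pauli] ac_simps)
  also have "\<dots> = ?c * (\<Sum>\<mu>s\<in>?P. (?c * (\<Sum>\<nu>s\<in>?P.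
      QKD_doubled \<rho> E n (?S \<mu>s) (?S \<nu>s) * tensor (Suc n) (?S \<nu>s) xr yr)) * tensor (Suc n) (?S \<mu>s) xl yl)"
    by (simp only: sum_distrib_left sum_distrib_right mult.assoc)
  also have "\<dots> = ?c * (\<Sum>\<mu>s\<in>?P. QKD_doubled \<rho> E n (?S \<mu>s) (munits yr xr) * tensor (Suc n) (?S \<mu>s) xl yl)"
    by (simp only: pauli_expansion[OF pauli multilinear_QKD_bra[OF lin]])
  also have "\<dots> = QKD_doubled \<rho> E n (munits yl xl) (munits yr xr)"
    by (rule pauli_expansion[OF pauli multilinear_QKD_ket[OF lin]])
  finally show ?thesis .
qed

lemma Re_eq_half_add_cnj: "complex_of_real (Re z) = (z + cnj z) / 2"
  by (simp add: complex_add_cnj)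

lemma tensor_cnj:
  assumes "\<And>k. k < m \<Longrightarrow> hermitian (A k)"
  shows "cnj (tensor m A ys xs) = tensor m A xs ys"
proof -
  have "cnj (A k (ys!k) (xs!k)) = A k (xs!k) (ys!k)" if "k < m" for k
    using assms[OF that] unfolding hermitian_iff_op_adj op_adj_def by (metis (no_types))
  then show ?thesis by (simp add: tensor_def cnj_prod)
qed

lemma sum_Re_mult_eq_half:
  assumes "\<And>\<mu>. \<mu> \<in> M \<Longrightarrow> cnj (T \<mu> y x) = T \<mu> x y"
  shows "(\<Sum>\<mu>\<in>M. complex_of_real (Re (C \<mu>)) * T \<mu> x y)
       = ((\<Sum>\<mu>\<in>M. C \<mu> * T \<mu> x y) + cnj (\<Sum>\<mu>\<in>M. C \<mu> * T \<mu> y x)) / 2"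
proof -
  have "(\<Sum>\<mu>\<in>M. complex_of_real (Re (C \<mu>)) * T \<mu> x y)
      = (\<Sum>\<mu>\<in>M. (C \<mu> * T \<mu> x y + cnj (C \<mu>) * T \<mu> x y) / 2)"
    by (simp add: Re_eq_half_add_cnj distrib_right)
  also have "\<dots> = ((\<Sum>\<mu>\<in>M. C \<mu> * T \<mu> x y) + (\<Sum>\<mu>\<in>M. cnj (C \<mu>) * T \<mu> x y)) / 2"
    by (simp only: sum_divide_distrib[symmetric] sum.distrib)
  also have "(\<Sum>\<mu>\<in>M. cnj (C \<mu>) * T \<mu> x y) = cnj (\<Sum>\<mu>\<in>M. C \<mu> * T \<mu> y x)"
    using assms by (simp add: cnj_sum)
  finally show ?thesis .
qed

lemma MH_state_eq:
  fixes \<rho> :: "('d::finite) sop"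
  assumes pauli: "gen_pauli \<sigma>"
  shows "MH_state \<sigma> \<rho> E n =
    (\<lambda>xs ys. (KD_state_right \<sigma> \<rho> E n xs ys + op_adj (KD_state_right \<sigma> \<rho> E n) xs ys) / 2)"
proof (intro ext)
  fix xs ys :: "'d list"
  have "(\<Sum>\<mu>s\<in>pauli_idx CARD('d) (Suc n).
          complex_of_real (Re (corr_right \<sigma> \<rho> E n \<mu>s)) * tensor (Suc n) (\<lambda>k. \<sigma> (\<mu>s!k)) xs ys)
      = ((\<Sum>\<mu>s\<in>pauli_idx CARD('d) (Suc n). corr_right \<sigma> \<rho> E n \<mu>s * tensor (Suc n) (\<lambda>k. \<sigma> (\<mu>s!k)) xs ys)
         + cnj (\<Sum>\<mu>s\<in>pauli_idx CARD('d) (Suc n).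
                  corr_right \<sigma> \<rho> E n \<mu>s * tensor (Suc n) (\<lambda>k. \<sigma> (\<mu>s!k)) ys xs)) / 2"
    by (rule sum_Re_mult_eq_half) (auto simp: tensor_cnj gen_pauli_hermitian[OF pauli])
  then show "MH_state \<sigma> \<rho> E n xs ys =
      (KD_state_right \<sigma> \<rho> E n xs ys + op_adj (KD_state_right \<sigma> \<rho> E n) xs ys) / 2"
    by (simp add: MH_state_def KD_state_right_def op_adj_def distrib_left add_divide_distrib)
qed

lemma MH_state_doubled_eq:
  fixes \<rho> :: "('d::finite) sop"
  assumes pauli: "gen_pauli \<sigma>"
  shows "MH_state_doubled \<sigma> \<rho> E n =
    (\<lambda>x y. (KD_state_doubled \<sigma> \<rho> E n x y + op_adj (KD_state_doubled \<sigma> \<rho> E n) x y) / 2)"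
proof (intro ext)
  fix x y :: "'d list \<times> 'd list"
  let ?P = "pauli_idx CARD('d) (Suc n)"
  let ?C = "corr_doubled \<sigma> \<rho> E n"
  let ?T = "\<lambda>\<mu>s \<nu>s. tensor2 (Suc n) (\<lambda>k. \<sigma> (\<mu>s!k)) (\<lambda>k. \<sigma> (\<nu>s!k))"
  let ?c = "1 / of_nat CARD('d) ^ (2 * Suc n) :: complex"
  have inner: "(\<Sum>\<nu>s\<in>?P. complex_of_real (Re (?C \<mu>s \<nu>s)) * ?T \<mu>s \<nu>s x y)
      = ((\<Sum>\<nu>s\<in>?P. ?C \<mu>s \<nu>s * ?T \<mu>s \<nu>s x y) + cnj (\<Sum>\<nu>s\<in>?P. ?C \<mu>s \<nu>s * ?T \<mu>s \<nu>s y x)) / 2"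
    if "\<mu>s \<in> ?P" for \<mu>s
    by (rule sum_Re_mult_eq_half)
      (use that in \<open>auto simp: tensor2_def tensor_cnj gen_pauli_hermitian[OF pauli] split: prod.split\<close>)
  have "MH_state_doubled \<sigma> \<rho> E n x y = ?c * (\<Sum>\<mu>s\<in>?P.
      ((\<Sum>\<nu>s\<in>?P. ?C \<mu>s \<nu>s * ?T \<mu>s \<nu>s x y) + cnj (\<Sum>\<nu>s\<in>?P. ?C \<mu>s \<nu>s * ?T \<mu>s \<nu>s y x)) / 2)"
    unfolding MH_state_doubled_def by (simp only: inner cong: sum.cong)
  also have "\<dots> = (?c * (\<Sum>\<mu>s\<in>?P. \<Sum>\<nu>s\<in>?P. ?C \<mu>s \<nu>s * ?T \<mu>s \<nu>s x y)
      + cnj (?c * (\<Sum>\<mu>s\<in>?P. \<Sum>\<nu>s\<in>?P. ?C \<mu>s \<nu>s * ?T \<mu>s \<nu>s y x))) / 2"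
    by (simp only: sum_divide_distrib[symmetric] sum.distrib cnj_sum complex_cnj_mult distrib_left
        add_divide_distrib) simp
  finally show "MH_state_doubled \<sigma> \<rho> E n x y =
      (KD_state_doubled \<sigma> \<rho> E n x y + op_adj (KD_state_doubled \<sigma> \<rho> E n) x y) / 2"
    by (simp only: KD_state_doubled_def op_adj_def)
qed

section \<open>Temporal Born rule\<close>

lemma tr_mul_on_tensor_kernel:
  fixes F :: "(nat \<Rightarrow> ('d::finite) sop) \<Rightarrow> complex"
  assumes "multilinear m F"
  shows "tr_on (idx_lists m) (mul_on (idx_lists m) (tensor m P) (\<lambda>xs ys. F (munits ys xs))) = F P"
  by (simp add: tr_on_def mul_on_def multilinear_kernel[OF assms, of P])

lemma tr_mul_on_product:
  "tr_on (I \<times> J) (mul_on (I \<times> J) (\<lambda>(x1, x2) (y1, y2). X x1 y1 * Y x2 y2) W)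
   = (\<Sum>x1\<in>I. \<Sum>y1\<in>I. X x1 y1 * (\<Sum>x2\<in>J. \<Sum>y2\<in>J. Y x2 y2 * W (y1, y2) (x1, x2)))"
proof -
  have "tr_on (I \<times> J) (mul_on (I \<times> J) (\<lambda>(x1, x2) (y1, y2). X x1 y1 * Y x2 y2) W)
      = (\<Sum>x1\<in>I. \<Sum>x2\<in>J. \<Sum>y1\<in>I. \<Sum>y2\<in>J. X x1 y1 * (Y x2 y2 * W (y1, y2) (x1, x2)))"
    by (simp only: tr_on_def mul_on_def sum.cartesian_product' prod.case mult.assoc)
  also have "\<dots> = (\<Sum>x1\<in>I. \<Sum>y1\<in>I. X x1 y1 * (\<Sum>x2\<in>J. \<Sum>y2\<in>J. Y x2 y2 * W (y1, y2) (x1, x2)))"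
    by (simp add: sum_distrib_left sum.swap[of _ J I])
  finally show ?thesis .
qed

lemma tr_mul_on_half_add_op_adj:
  assumes "\<And>x z. x \<in> I \<Longrightarrow> z \<in> I \<Longrightarrow> X x z = cnj (X z x)"
  shows "tr_on I (mul_on I X (\<lambda>x y. (Y x y + op_adj Y x y) / 2)) = complex_of_real (Re (tr_on I (mul_on I X Y)))"
proof -
  have "cnj (tr_on I (mul_on I X Y)) = (\<Sum>x\<in>I. \<Sum>z\<in>I. cnj (X x z) * cnj (Y z x))"
    by (simp add: tr_on_def mul_on_def cnj_sum)
  also have "\<dots> = (\<Sum>x\<in>I. \<Sum>z\<in>I. X z x * cnj (Y z x))"
    by (intro sum.cong refl) (metis assms complex_cnj_cnj)
  also have "\<dots> = tr_on I (mul_on I X (op_adj Y))"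
    by (subst sum.swap) (simp add: tr_on_def mul_on_def op_adj_def)
  finally have adj: "tr_on I (mul_on I X (op_adj Y)) = cnj (tr_on I (mul_on I X Y))" ..
  have "tr_on I (mul_on I X (\<lambda>x y. (Y x y + op_adj Y x y) / 2))
      = (tr_on I (mul_on I X Y) + tr_on I (mul_on I X (op_adj Y))) / 2"
    by (simp add: tr_on_def mul_on_def sum.distrib algebra_simps add_divide_distrib sum_divide_distrib)
  then show ?thesis
    by (simp only: adj Re_eq_half_add_cnj)
qed

lemma born_rule_right:
  fixes \<rho> :: "('d::finite) sop"
  assumes lin: "\<forall>j\<in>{1..n}. clinear_map (E j)" and pauli: "gen_pauli \<sigma>"
  shows "QKD_right \<rho> E n P = tr_on (idx_lists (Suc n))
           (mul_on (idx_lists (Suc n)) (tensor (Suc n) P) (KD_state_right \<sigma> \<rho> E n))"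
  using tr_mul_on_tensor_kernel[OF multilinear_QKD_bra[OF lin], of P]
  by (simp add: KD_state_right_eq[OF lin pauli, abs_def] QKD_right_eq_doubled)

lemma born_rule_left:
  fixes \<rho> :: "('d::finite) sop"
  assumes lin: "\<forall>j\<in>{1..n}. clinear_map (E j)" and pauli: "gen_pauli \<sigma>"
  shows "QKD_left \<rho> E n P = tr_on (idx_lists (Suc n))
           (mul_on (idx_lists (Suc n)) (tensor (Suc n) P) (KD_state_left \<sigma> \<rho> E n))"
  using tr_mul_on_tensor_kernel[OF multilinear_QKD_ket[OF lin], of P]
  by (simp add: KD_state_left_eq[OF lin pauli, abs_def] QKD_left_eq_doubled)

lemma born_rule_doubled:
  fixes \<rho> :: "('d::finite) sop"
  assumes lin: "\<forall>j\<in>{1..n}. clinear_map (E j)" and pauli: "gen_pauli \<sigma>"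
  shows "QKD_doubled \<rho> E n A B = tr_on (idx_lists (Suc n) \<times> idx_lists (Suc n))
           (mul_on (idx_lists (Suc n) \<times> idx_lists (Suc n)) (tensor2 (Suc n) A B) (KD_state_doubled \<sigma> \<rho> E n))"
proof -
  let ?I = "idx_lists (Suc n) :: 'd list set"
  have "QKD_doubled \<rho> E n A B = (\<Sum>xl\<in>?I. \<Sum>yl\<in>?I. tensor (Suc n) A xl yl * QKD_doubled \<rho> E n (munits xl yl) B)"
    by (rule multilinear_kernel[OF multilinear_QKD_ket[OF lin]])
  also have "\<dots> = (\<Sum>xl\<in>?I. \<Sum>yl\<in>?I. tensor (Suc n) A xl yl *
      (\<Sum>xr\<in>?I. \<Sum>yr\<in>?I. tensor (Suc n) B xr yr * QKD_doubled \<rho> E n (munits xl yl) (munits xr yr)))"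
    by (simp only: multilinear_kernel[OF multilinear_QKD_bra[OF lin], symmetric])
  also have "\<dots> = tr_on (?I \<times> ?I) (mul_on (?I \<times> ?I) (tensor2 (Suc n) A B) (KD_state_doubled \<sigma> \<rho> E n))"
    unfolding tensor2_def tr_mul_on_product by (simp add: KD_state_doubled_eq[OF lin pauli])
  finally show ?thesis .
qed

lemma cnj_QKD_doubled_hermitian:
  assumes adj: "\<forall>k\<in>{1..n}. \<forall>A. E k (op_adj A) = op_adj (E k A)" and h: "hermitian \<rho>"
    and hA: "\<And>k. k < Suc n \<Longrightarrow> hermitian (A k)"
  shows "cnj (QKD_doubled \<rho> E n A A) = QKD_doubled \<rho> E n A A"
proof -
  have "sandwich_chain \<rho> E (\<lambda>k. op_adj (A k)) (\<lambda>k. op_adj (A k)) n = sandwich_chain \<rho> E A A n"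
    by (rule sandwich_chain_cong) (use hA in \<open>auto simp: hermitian_iff_op_adj\<close>)
  then show ?thesis
    unfolding cnj_QKD_doubled[OF adj h] by (simp add: QKD_doubled_def)
qed

lemma born_rule_MH:
  fixes \<rho> :: "('d::finite) sop"
  assumes lin: "\<forall>j\<in>{1..n}. clinear_map (E j)" and pauli: "gen_pauli \<sigma>"
    and hB: "\<And>k. k < Suc n \<Longrightarrow> hermitian (B k)"
  shows "complex_of_real (QMH \<rho> E n B) = tr_on (idx_lists (Suc n))
           (mul_on (idx_lists (Suc n)) (tensor (Suc n) B) (MH_state \<sigma> \<rho> E n))"
  unfolding MH_state_eq[OF pauli] QMH_def born_rule_right[OF lin pauli]
  by (rule tr_mul_on_half_add_op_adj[symmetric]) (simp add: tensor_cnj hB)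

lemma born_rule_MH_doubled:
  fixes \<rho> :: "('d::finite) sop"
  assumes lin: "\<forall>j\<in>{1..n}. clinear_map (E j)" and pauli: "gen_pauli \<sigma>"
    and hA: "\<And>k. k < Suc n \<Longrightarrow> hermitian (A k)" and hB: "\<And>k. k < Suc n \<Longrightarrow> hermitian (B k)"
  shows "complex_of_real (QMH_doubled \<rho> E n A B) = tr_on (idx_lists (Suc n) \<times> idx_lists (Suc n))
           (mul_on (idx_lists (Suc n) \<times> idx_lists (Suc n)) (tensor2 (Suc n) A B) (MH_state_doubled \<sigma> \<rho> E n))"
  unfolding MH_state_doubled_eq[OF pauli] QMH_doubled_def born_rule_doubled[OF lin pauli]
  by (rule tr_mul_on_half_add_op_adj[symmetric]) (auto simp: tensor2_def tensor_cnj hA hB)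

lemma born_rule_LvN_MH:
  fixes \<rho> :: "('d::finite) sop"
  assumes lin: "\<forall>j\<in>{1..n}. clinear_map (E j)" and pauli: "gen_pauli \<sigma>"
    and adj: "\<forall>k\<in>{1..n}. \<forall>A. E k (op_adj A) = op_adj (E k A)" and h: "hermitian \<rho>"
    and hA: "\<And>k. k < Suc n \<Longrightarrow> hermitian (A k)"
  shows "QLvN \<rho> E n A = tr_on (idx_lists (Suc n) \<times> idx_lists (Suc n))
           (mul_on (idx_lists (Suc n) \<times> idx_lists (Suc n)) (tensor2 (Suc n) A A) (MH_state_doubled \<sigma> \<rho> E n))"
proof -
  have "QLvN \<rho> E n A = complex_of_real (QMH_doubled \<rho> E n A A)"
    using cnj_QKD_doubled_hermitian[OF adj h hA]
    by (simp add: QLvN_def QMH_doubled_def Re_eq_half_add_cnj)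
  then show ?thesis by (simp only: born_rule_MH_doubled[OF lin pauli hA hA])
qed

section \<open>Marginals and Kolmogorov consistency\<close>

lemma ptrace_L_KD_state_doubled:
  fixes \<rho> :: "('d::finite) sop"
  assumes lin: "\<forall>j\<in>{1..n}. clinear_map (E j)" and pauli: "gen_pauli \<sigma>"
  shows "ptrace_L (Suc n) (KD_state_doubled \<sigma> \<rho> E n) = KD_state_right \<sigma> \<rho> E n"
  by (intro ext) (simp add: ptrace_L_def KD_state_doubled_eq[OF lin pauli] KD_state_right_eq[OF lin pauli]
      multilinear_kernel_idm[OF multilinear_QKD_ket[OF lin]])

lemma ptrace_R_KD_state_doubled:
  fixes \<rho> :: "('d::finite) sop"
  assumes lin: "\<forall>j\<in>{1..n}. clinear_map (E j)" and pauli: "gen_pauli \<sigma>"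
  shows "ptrace_R (Suc n) (KD_state_doubled \<sigma> \<rho> E n) = KD_state_left \<sigma> \<rho> E n"
  by (intro ext) (simp add: ptrace_R_def KD_state_doubled_eq[OF lin pauli] KD_state_left_eq[OF lin pauli]
      multilinear_kernel_idm[OF multilinear_QKD_bra[OF lin]])

lemma op_adj_idm [simp]: "op_adj idm = idm"
  by (intro ext) (simp add: op_adj_def idm_def)

lemma op_adj_munit [simp]: "op_adj (munit a b) = munit b a"
  by (intro ext) (auto simp: op_adj_def munit_def)

lemma KD_state_right_eq_op_adj_left:
  fixes \<rho> :: "('d::finite) sop"
  assumes lin: "\<forall>j\<in>{1..n}. clinear_map (E j)" and pauli: "gen_pauli \<sigma>"
    and adj: "\<forall>k\<in>{1..n}. \<forall>A. E k (op_adj A) = op_adj (E k A)" and h: "hermitian \<rho>"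
  shows "KD_state_right \<sigma> \<rho> E n = op_adj (KD_state_left \<sigma> \<rho> E n)"
  by (intro ext) (simp add: op_adj_def KD_state_right_eq[OF lin pauli] KD_state_left_eq[OF lin pauli]
      cnj_QKD_doubled[OF adj h] munits_def)

text \<open>The operator \<open>|y\<^sub>j\<rangle>\<langle>x\<^sub>j|\<close> at time \<open>ts!j\<close> and the identity at all other times.\<close>
definition embed_units :: "nat list \<Rightarrow> 'd list \<Rightarrow> 'd list \<Rightarrow> nat \<Rightarrow> 'd sop" where
  "embed_units ts xs ys k =
     (case map_of (zip ts (zip ys xs)) k of Some (y, x) \<Rightarrow> munit y x | None \<Rightarrow> idm)"

lemma embed_units_nth:
  assumes "distinct ts" "length xs = length ts" "length ys = length ts" "j < length ts"
  shows "embed_units ts xs ys (ts!j) = munit (ys!j) (xs!j)"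
  using assms by (simp add: embed_units_def map_of_zip_nth)

lemma embed_units_notin: "k \<notin> set ts \<Longrightarrow> embed_units ts xs ys k = idm"
  by (auto simp: embed_units_def dest!: map_of_SomeD set_zip_leftD split: option.split)

lemma tensor_embed_units:
  assumes dist: "distinct ts" and lt: "\<forall>t\<in>set ts. t < m"
    and len: "length xs = length ts" "length ys = length ts"
    and ab: "a \<in> idx_lists m" "b \<in> idx_lists m"
  shows "tensor m (embed_units ts xs ys) a b = (if (b, a) \<in> keep_pairs m ts xs ys then 1 else 0)"
proof -
  define C where "C k \<longleftrightarrow> (\<forall>j<length ts. ts!j = k \<longrightarrow> a!k = ys!j \<and> b!k = xs!j) \<and>
      (k \<notin> set ts \<longrightarrow> a!k = b!k)" for k
  have factor: "embed_units ts xs ys k (a!k) (b!k) = (if C k then 1 else 0)" for k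
  proof (cases "k \<in> set ts")
    case True
    then obtain j where j: "j < length ts" "ts!j = k" by (auto simp: in_set_conv_nth)
    have "C k \<longleftrightarrow> a!k = ys!j \<and> b!k = xs!j"
      using j dist by (auto simp: C_def nth_eq_iff_index_eq)
    with j show ?thesis
      using embed_units_nth[OF dist len j(1)] by (simp add: munit_def)
  next
    case False
    then show ?thesis by (auto simp: C_def embed_units_notin idm_def)
  qed
  have "(\<forall>k<m. C k) \<longleftrightarrow> (b, a) \<in> keep_pairs m ts xs ys"
    using ab lt by (auto simp: C_def keep_pairs_def idx_lists_def)
  then show ?thesis
    by (simp add: tensor_def factor prod_lessThan_indicator)
qed

lemma sum_keep_pairs_multilinear:
  fixes F :: "(nat \<Rightarrow> ('d::finite) sop) \<Rightarrow> complex"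
  assumes F: "multilinear m F" and dist: "distinct ts" and lt: "\<forall>t\<in>set ts. t < m"
    and len: "length xs = length ts" "length ys = length ts"
  shows "(\<Sum>(zs, ws)\<in>keep_pairs m ts xs ys. F (munits ws zs)) = F (embed_units ts xs ys)"
proof -
  let ?I = "idx_lists m :: 'd list set" and ?K = "keep_pairs m ts xs ys"
  have "?K = {p \<in> ?I \<times> ?I. p \<in> ?K}"
    by (auto simp: keep_pairs_def idx_lists_def)
  then have "(\<Sum>(zs, ws)\<in>?K. F (munits ws zs))
      = (\<Sum>(zs, ws)\<in>?I \<times> ?I. if (zs, ws) \<in> ?K then F (munits ws zs) else 0)"
    by (simp add: sum.inter_filter[symmetric] case_prod_unfold)
  also have "\<dots> = (\<Sum>ws\<in>?I. \<Sum>zs\<in>?I. tensor m (embed_units ts xs ys) ws zs * F (munits ws zs))"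
    by (subst sum.cartesian_product', subst sum.swap)
      (auto simp: tensor_embed_units[OF dist lt len] intro!: sum.cong)
  also have "\<dots> = F (embed_units ts xs ys)"
    by (rule multilinear_kernel[OF F, symmetric])
  finally show ?thesis .
qed

lemma QKD_doubled_single_site:
  assumes k: "k \<le> n" and tp: "\<forall>t\<in>{1..n}. trace_preserving (E t)"
    and idle: "\<And>t. t \<noteq> k \<Longrightarrow> L t = idm \<and> R t = idm"
  shows "QKD_doubled \<rho> E n L R = mtr (mmul (L k) (mmul (evolved_state \<rho> E k) (R k)))"
proof -
  have "mtr (sandwich_chain \<rho> E L R n) = mtr (sandwich_chain \<rho> E L R k)"
    by (rule mtr_sandwich_chain_idle_tail[OF k]) (use tp idle in auto)
  also have "sandwich_chain \<rho> E L R k = mmul (L k) (mmul (evolved_state \<rho> E k) (R k))"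
    unfolding evolved_state_def by (rule sandwich_chain_idle_prefix) (use idle in auto)
  finally show ?thesis by (simp add: QKD_doubled_def)
qed

lemma embed_units_single: "embed_units [k] [x] [y] t = (if t = k then munit y x else idm)"
  by (simp add: embed_units_def)

lemma evolved_state_ptrace_keep_right:
  fixes \<rho> :: "('d::finite) sop"
  assumes lin: "\<forall>j\<in>{1..n}. clinear_map (E j)" and tp: "\<forall>t\<in>{1..n}. trace_preserving (E t)"
    and pauli: "gen_pauli \<sigma>" and k: "k \<le> n"
  shows "evolved_state \<rho> E k x y = ptrace_keep (Suc n) [k] (KD_state_right \<sigma> \<rho> E n) [x] [y]"
  using k
  by (simp add: ptrace_keep_def KD_state_right_eq[OF lin pauli] QKD_doubled_single_site[OF k tp]
      sum_keep_pairs_multilinear[OF multilinear_QKD_bra[OF lin]] embed_units_single mtr_mmul_munit_right)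

lemma evolved_state_ptrace_keep_left:
  fixes \<rho> :: "('d::finite) sop"
  assumes lin: "\<forall>j\<in>{1..n}. clinear_map (E j)" and tp: "\<forall>t\<in>{1..n}. trace_preserving (E t)"
    and pauli: "gen_pauli \<sigma>" and k: "k \<le> n"
  shows "evolved_state \<rho> E k x y = ptrace_keep (Suc n) [k] (KD_state_left \<sigma> \<rho> E n) [x] [y]"
  using k
  by (simp add: ptrace_keep_def KD_state_left_eq[OF lin pauli] QKD_doubled_single_site[OF k tp]
      sum_keep_pairs_multilinear[OF multilinear_QKD_ket[OF lin]] embed_units_single mtr_mmul_munit_left)

lemma evolved_state_ptrace_keep_MH:
  fixes \<rho> :: "('d::finite) sop"
  assumes lin: "\<forall>j\<in>{1..n}. clinear_map (E j)" and tp: "\<forall>t\<in>{1..n}. trace_preserving (E t)"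
    and pauli: "gen_pauli \<sigma>" and adj: "\<forall>k\<in>{1..n}. \<forall>A. E k (op_adj A) = op_adj (E k A)"
    and h: "hermitian \<rho>" and k: "k \<le> n"
  shows "evolved_state \<rho> E k x y = ptrace_keep (Suc n) [k] (MH_state \<sigma> \<rho> E n) [x] [y]"
proof -
  have "op_adj (KD_state_right \<sigma> \<rho> E n) = KD_state_left \<sigma> \<rho> E n"
    by (simp add: KD_state_right_eq_op_adj_left[OF lin pauli adj h])
  then have "ptrace_keep (Suc n) [k] (MH_state \<sigma> \<rho> E n) [x] [y] = (ptrace_keep (Suc n) [k] (KD_state_right \<sigma> \<rho> E n) [x] [y]
      + ptrace_keep (Suc n) [k] (KD_state_left \<sigma> \<rho> E n) [x] [y]) / 2"
    by (simp add: MH_state_eq[OF pauli] ptrace_keep_def case_prod_unfold sum.distrib sum_divide_distrib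
        add_divide_distrib)
  then show ?thesis
    by (simp add: evolved_state_ptrace_keep_right[OF lin tp pauli k, symmetric]
        evolved_state_ptrace_keep_left[OF lin tp pauli k, symmetric])
qed

lemma ptrace_keep_KD_state_right:
  fixes \<rho> :: "('d::finite) sop"
  assumes lin: "\<forall>j\<in>{1..n}. clinear_map (E j)" and tp: "\<forall>t\<in>{1..n}. trace_preserving (E t)"
    and pauli: "gen_pauli \<sigma>"
    and ts: "ts \<noteq> []" "ts!0 = 0" "sorted_wrt (<) ts" "\<forall>t\<in>set ts. t \<le> n"
  shows "mop_eq (length ts) (ptrace_keep (Suc n) ts (KD_state_right \<sigma> \<rho> E n))
           (KD_state_right \<sigma> \<rho> (sub_channels E ts) (length ts - 1))"
  unfolding mop_eq_def
proof (intro ballI)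
  fix xs ys :: "'d list"
  assume "xs \<in> idx_lists (length ts)" "ys \<in> idx_lists (length ts)"
  then have len: "length xs = length ts" "length ys = length ts" by (simp_all add: idx_lists_def)
  have dist: "distinct ts" using ts(3) by (simp add: strict_sorted_iff)
  have lt: "\<forall>t\<in>set ts. t < Suc n" using ts(4) by auto
  have "ptrace_keep (Suc n) ts (KD_state_right \<sigma> \<rho> E n) xs ys = QKD_doubled \<rho> E n (\<lambda>_. idm) (embed_units ts xs ys)"
    by (simp add: ptrace_keep_def KD_state_right_eq[OF lin pauli]
        sum_keep_pairs_multilinear[OF multilinear_QKD_bra[OF lin] dist lt len])
  also have "\<dots> = QKD_doubled \<rho> (sub_channels E ts) (length ts - 1) (\<lambda>_. idm) (munits ys xs)"
    by (rule QKD_doubled_sub_process[OF ts])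
      (simp_all add: embed_units_notin embed_units_nth[OF dist len] munits_def tp)
  also have "\<dots> = KD_state_right \<sigma> \<rho> (sub_channels E ts) (length ts - 1) xs ys"
    by (rule KD_state_right_eq[OF clinear_sub_channels[OF ts(3,4) lin] pauli, symmetric])
  finally show "ptrace_keep (Suc n) ts (KD_state_right \<sigma> \<rho> E n) xs ys
      = KD_state_right \<sigma> \<rho> (sub_channels E ts) (length ts - 1) xs ys" .
qed

lemma ptrace_keep_KD_state_left:
  fixes \<rho> :: "('d::finite) sop"
  assumes lin: "\<forall>j\<in>{1..n}. clinear_map (E j)" and tp: "\<forall>t\<in>{1..n}. trace_preserving (E t)"
    and pauli: "gen_pauli \<sigma>"
    and ts: "ts \<noteq> []" "ts!0 = 0" "sorted_wrt (<) ts" "\<forall>t\<in>set ts. t \<le> n"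
  shows "mop_eq (length ts) (ptrace_keep (Suc n) ts (KD_state_left \<sigma> \<rho> E n))
           (KD_state_left \<sigma> \<rho> (sub_channels E ts) (length ts - 1))"
  unfolding mop_eq_def
proof (intro ballI)
  fix xs ys :: "'d list"
  assume "xs \<in> idx_lists (length ts)" "ys \<in> idx_lists (length ts)"
  then have len: "length xs = length ts" "length ys = length ts" by (simp_all add: idx_lists_def)
  have dist: "distinct ts" using ts(3) by (simp add: strict_sorted_iff)
  have lt: "\<forall>t\<in>set ts. t < Suc n" using ts(4) by auto
  have "ptrace_keep (Suc n) ts (KD_state_left \<sigma> \<rho> E n) xs ys = QKD_doubled \<rho> E n (embed_units ts xs ys) (\<lambda>_. idm)"
    by (simp add: ptrace_keep_def KD_state_left_eq[OF lin pauli]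
        sum_keep_pairs_multilinear[OF multilinear_QKD_ket[OF lin] dist lt len])
  also have "\<dots> = QKD_doubled \<rho> (sub_channels E ts) (length ts - 1) (munits ys xs) (\<lambda>_. idm)"
    by (rule QKD_doubled_sub_process[OF ts])
      (simp_all add: embed_units_notin embed_units_nth[OF dist len] munits_def tp)
  also have "\<dots> = KD_state_left \<sigma> \<rho> (sub_channels E ts) (length ts - 1) xs ys"
    by (rule KD_state_left_eq[OF clinear_sub_channels[OF ts(3,4) lin] pauli, symmetric])
  finally show "ptrace_keep (Suc n) ts (KD_state_left \<sigma> \<rho> E n) xs ys
      = KD_state_left \<sigma> \<rho> (sub_channels E ts) (length ts - 1) xs ys" .
qed

lemma ptrace_keep2_KD_state_doubled:
  fixes \<rho> :: "('d::finite) sop"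
  assumes lin: "\<forall>j\<in>{1..n}. clinear_map (E j)" and tp: "\<forall>t\<in>{1..n}. trace_preserving (E t)"
    and pauli: "gen_pauli \<sigma>"
    and ts: "ts \<noteq> []" "ts!0 = 0" "sorted_wrt (<) ts" "\<forall>t\<in>set ts. t \<le> n"
  shows "dop_eq (length ts) (ptrace_keep2 (Suc n) ts (KD_state_doubled \<sigma> \<rho> E n))
           (KD_state_doubled \<sigma> \<rho> (sub_channels E ts) (length ts - 1))"
  unfolding dop_eq_def
proof (clarify)
  fix xl xr yl yr :: "'d list"
  assume "xl \<in> idx_lists (length ts)" "xr \<in> idx_lists (length ts)"
    "yl \<in> idx_lists (length ts)" "yr \<in> idx_lists (length ts)"
  then have len: "length xl = length ts" "length yl = length ts" "length xr = length ts" "length yr = length ts"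
    by (simp_all add: idx_lists_def)
  have dist: "distinct ts" using ts(3) by (simp add: strict_sorted_iff)
  have lt: "\<forall>t\<in>set ts. t < Suc n" using ts(4) by auto
  have "ptrace_keep2 (Suc n) ts (KD_state_doubled \<sigma> \<rho> E n) (xl, xr) (yl, yr)
      = (\<Sum>(zl, wl)\<in>keep_pairs (Suc n) ts xl yl. QKD_doubled \<rho> E n (munits wl zl) (embed_units ts xr yr))"
    by (simp add: ptrace_keep2_def KD_state_doubled_eq[OF lin pauli]
        sum_keep_pairs_multilinear[OF multilinear_QKD_bra[OF lin] dist lt len(3,4)])
  also have "\<dots> = QKD_doubled \<rho> E n (embed_units ts xl yl) (embed_units ts xr yr)"
    by (rule sum_keep_pairs_multilinear[OF multilinear_QKD_ket[OF lin] dist lt len(1,2)])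
  also have "\<dots> = QKD_doubled \<rho> (sub_channels E ts) (length ts - 1) (munits yl xl) (munits yr xr)"
    by (rule QKD_doubled_sub_process[OF ts])
      (simp_all add: embed_units_notin embed_units_nth[OF dist] len munits_def tp)
  also have "\<dots> = KD_state_doubled \<sigma> \<rho> (sub_channels E ts) (length ts - 1) (xl, xr) (yl, yr)"
    by (rule KD_state_doubled_eq[OF clinear_sub_channels[OF ts(3,4) lin] pauli, symmetric])
  finally show "ptrace_keep2 (Suc n) ts (KD_state_doubled \<sigma> \<rho> E n) (xl, xr) (yl, yr)
      = KD_state_doubled \<sigma> \<rho> (sub_channels E ts) (length ts - 1) (xl, xr) (yl, yr)" .
qed

lemma proj_family_hermitian:
  assumes "\<forall>k\<le>n. proj_family (Out k) (P k)" "as \<in> outcome_lists Out (Suc n)" "k < Suc n"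
  shows "hermitian (P k (as!k))"
  using assms by (simp add: proj_family_def outcome_lists_def)

lemma temporal_Born_rule:
  fixes \<rho> :: "('d::finite) sop"
  assumes lin: "\<forall>j\<in>{1..n}. clinear_map (E j)" and pauli: "gen_pauli \<sigma>"
    and adj: "\<forall>k\<in>{1..n}. \<forall>A. E k (op_adj A) = op_adj (E k A)" and h: "hermitian \<rho>"
    and hA: "\<And>k. k < Suc n \<Longrightarrow> hermitian (A k)" and hB: "\<And>k. k < Suc n \<Longrightarrow> hermitian (B k)"
  shows "QKD_right \<rho> E n B =
           tr_on (idx_lists (Suc n)) (mul_on (idx_lists (Suc n)) (tensor (Suc n) B) (KD_state_right \<sigma> \<rho> E n))
    \<and> QKD_left \<rho> E n B =
           tr_on (idx_lists (Suc n)) (mul_on (idx_lists (Suc n)) (tensor (Suc n) B) (KD_state_left \<sigma> \<rho> E n))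
    \<and> QKD_doubled \<rho> E n A B =
           tr_on (idx_lists (Suc n) \<times> idx_lists (Suc n)) (mul_on (idx_lists (Suc n) \<times> idx_lists (Suc n))
             (tensor2 (Suc n) A B) (KD_state_doubled \<sigma> \<rho> E n))
    \<and> complex_of_real (QMH \<rho> E n B) =
           tr_on (idx_lists (Suc n)) (mul_on (idx_lists (Suc n)) (tensor (Suc n) B) (MH_state \<sigma> \<rho> E n))
    \<and> complex_of_real (QMH_doubled \<rho> E n A B) =
           tr_on (idx_lists (Suc n) \<times> idx_lists (Suc n)) (mul_on (idx_lists (Suc n) \<times> idx_lists (Suc n))
             (tensor2 (Suc n) A B) (MH_state_doubled \<sigma> \<rho> E n))
    \<and> QLvN \<rho> E n A =
           tr_on (idx_lists (Suc n) \<times> idx_lists (Suc n)) (mul_on (idx_lists (Suc n) \<times> idx_lists (Suc n))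
             (tensor2 (Suc n) A A) (KD_state_doubled \<sigma> \<rho> E n))
    \<and> QLvN \<rho> E n A =
           tr_on (idx_lists (Suc n) \<times> idx_lists (Suc n)) (mul_on (idx_lists (Suc n) \<times> idx_lists (Suc n))
             (tensor2 (Suc n) A A) (MH_state_doubled \<sigma> \<rho> E n))"
  unfolding QLvN_def
  by (intro conjI born_rule_right[OF lin pauli] born_rule_left[OF lin pauli] born_rule_doubled[OF lin pauli]
      born_rule_MH[OF lin pauli hB] born_rule_MH_doubled[OF lin pauli hA hB]
      born_rule_LvN_MH[OF lin pauli adj h hA, unfolded QLvN_def])

theorem theorem2:
  fixes \<rho> :: "('d::finite) sop" and E :: "nat \<Rightarrow> 'd sop \<Rightarrow> 'd sop"
    and \<sigma> :: "nat \<Rightarrow> 'd sop" and n :: nat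
  assumes proc: "multi_time_process n \<rho> E"
    and pauli: "gen_pauli \<sigma>"
  shows
    \<comment> \<open>(1)\<close>
    "mop_eq (Suc n) (KD_state_right \<sigma> \<rho> E n) (ptrace_L (Suc n) (KD_state_doubled \<sigma> \<rho> E n))
     \<and> mop_eq (Suc n) (KD_state_left \<sigma> \<rho> E n) (ptrace_R (Suc n) (KD_state_doubled \<sigma> \<rho> E n))
     \<and> mop_eq (Suc n) (KD_state_right \<sigma> \<rho> E n) (op_adj (KD_state_left \<sigma> \<rho> E n))
     \<and> (\<forall>k\<le>n. \<forall>x y.
          evolved_state \<rho> E k x y = ptrace_keep (Suc n) [k] (KD_state_right \<sigma> \<rho> E n) [x] [y]
        \<and> evolved_state \<rho> E k x y = ptrace_keep (Suc n) [k] (KD_state_left \<sigma> \<rho> E n) [x] [y])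
     \<and> (\<forall>ts. ts \<noteq> [] \<and> ts!0 = 0 \<and> sorted_wrt (<) ts \<and> (\<forall>t\<in>set ts. t \<le> n) \<longrightarrow>
          mop_eq (length ts) (ptrace_keep (Suc n) ts (KD_state_right \<sigma> \<rho> E n))
                 (KD_state_right \<sigma> \<rho> (sub_channels E ts) (length ts - 1))
        \<and> mop_eq (length ts) (ptrace_keep (Suc n) ts (KD_state_left \<sigma> \<rho> E n))
                 (KD_state_left \<sigma> \<rho> (sub_channels E ts) (length ts - 1))
        \<and> dop_eq (length ts) (ptrace_keep2 (Suc n) ts (KD_state_doubled \<sigma> \<rho> E n))
                 (KD_state_doubled \<sigma> \<rho> (sub_channels E ts) (length ts - 1)))
     \<comment> \<open>(2)\<close>
     \<and> mop_eq (Suc n) (MH_state \<sigma> \<rho> E n)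
         (\<lambda>x y. (KD_state_left \<sigma> \<rho> E n x y + op_adj (KD_state_left \<sigma> \<rho> E n) x y) / 2)
     \<and> mop_eq (Suc n) (MH_state \<sigma> \<rho> E n)
         (\<lambda>x y. (KD_state_right \<sigma> \<rho> E n x y + op_adj (KD_state_right \<sigma> \<rho> E n) x y) / 2)
     \<and> dop_eq (Suc n) (MH_state_doubled \<sigma> \<rho> E n)
         (\<lambda>x y. (KD_state_doubled \<sigma> \<rho> E n x y + op_adj (KD_state_doubled \<sigma> \<rho> E n) x y) / 2)
     \<and> (\<forall>k\<le>n. \<forall>x y. evolved_state \<rho> E k x y = ptrace_keep (Suc n) [k] (MH_state \<sigma> \<rho> E n) [x] [y])
     \<comment> \<open>(3) temporal Born rule\<close>
     \<and> (\<forall>(PA :: nat \<Rightarrow> 'a \<Rightarrow> 'd sop) PB OA OB.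
          (\<forall>k\<le>n. proj_family (OA k) (PA k) \<and> proj_family (OB k) (PB k)) \<longrightarrow>
          (\<forall>as\<in>outcome_lists OA (Suc n). \<forall>bs\<in>outcome_lists OB (Suc n).
             QKD_right \<rho> E n (\<lambda>k. PB k (bs!k)) =
               tr_on (idx_lists (Suc n)) (mul_on (idx_lists (Suc n))
                 (tensor (Suc n) (\<lambda>k. PB k (bs!k))) (KD_state_right \<sigma> \<rho> E n))
           \<and> QKD_left \<rho> E n (\<lambda>k. PB k (bs!k)) =
               tr_on (idx_lists (Suc n)) (mul_on (idx_lists (Suc n))
                 (tensor (Suc n) (\<lambda>k. PB k (bs!k))) (KD_state_left \<sigma> \<rho> E n))
           \<and> QKD_doubled \<rho> E n (\<lambda>k. PA k (as!k)) (\<lambda>k. PB k (bs!k)) =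
               tr_on (idx_lists (Suc n) \<times> idx_lists (Suc n)) (mul_on (idx_lists (Suc n) \<times> idx_lists (Suc n))
                 (tensor2 (Suc n) (\<lambda>k. PA k (as!k)) (\<lambda>k. PB k (bs!k))) (KD_state_doubled \<sigma> \<rho> E n))
           \<and> complex_of_real (QMH \<rho> E n (\<lambda>k. PB k (bs!k))) =
               tr_on (idx_lists (Suc n)) (mul_on (idx_lists (Suc n))
                 (tensor (Suc n) (\<lambda>k. PB k (bs!k))) (MH_state \<sigma> \<rho> E n))
           \<and> complex_of_real (QMH_doubled \<rho> E n (\<lambda>k. PA k (as!k)) (\<lambda>k. PB k (bs!k))) =
               tr_on (idx_lists (Suc n) \<times> idx_lists (Suc n)) (mul_on (idx_lists (Suc n) \<times> idx_lists (Suc n))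
                 (tensor2 (Suc n) (\<lambda>k. PA k (as!k)) (\<lambda>k. PB k (bs!k))) (MH_state_doubled \<sigma> \<rho> E n))
           \<and> QLvN \<rho> E n (\<lambda>k. PA k (as!k)) =
               tr_on (idx_lists (Suc n) \<times> idx_lists (Suc n)) (mul_on (idx_lists (Suc n) \<times> idx_lists (Suc n))
                 (tensor2 (Suc n) (\<lambda>k. PA k (as!k)) (\<lambda>k. PA k (as!k))) (KD_state_doubled \<sigma> \<rho> E n))
           \<and> QLvN \<rho> E n (\<lambda>k. PA k (as!k)) =
               tr_on (idx_lists (Suc n) \<times> idx_lists (Suc n)) (mul_on (idx_lists (Suc n) \<times> idx_lists (Suc n))
                 (tensor2 (Suc n) (\<lambda>k. PA k (as!k)) (\<lambda>k. PA k (as!k))) (MH_state_doubled \<sigma> \<rho> E n))))"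
proof -
  have lin: "\<forall>j\<in>{1..n}. clinear_map (E j)" and tp: "\<forall>j\<in>{1..n}. trace_preserving (E j)"
    and adj: "\<forall>j\<in>{1..n}. \<forall>A. E j (op_adj A) = op_adj (E j A)" and h: "hermitian \<rho>"
    using proc by (simp_all add: multi_time_process_def cptp_def cp_op_adj density_def psd_hermitian)
  have right_left: "KD_state_right \<sigma> \<rho> E n = op_adj (KD_state_left \<sigma> \<rho> E n)"
    by (rule KD_state_right_eq_op_adj_left[OF lin pauli adj h])
  show ?thesis
    by (intro conjI; (simp add: ptrace_L_KD_state_doubled[OF lin pauli] ptrace_R_KD_state_doubled[OF lin pauli]
          right_left MH_state_eq[OF pauli] MH_state_doubled_eq[OF pauli] add.commute mop_eq_def dop_eq_def;
          fail)?)
      ((use evolved_state_ptrace_keep_right[OF lin tp pauli] evolved_state_ptrace_keep_left[OF lin tp pauli]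
          in blast),
       (use ptrace_keep_KD_state_right[OF lin tp pauli] ptrace_keep_KD_state_left[OF lin tp pauli]
          ptrace_keep2_KD_state_doubled[OF lin tp pauli] in blast),
       (use evolved_state_ptrace_keep_MH[OF lin tp pauli adj h] in blast),
       (intro allI impI ballI temporal_Born_rule[OF lin pauli adj h]; blast intro: proj_family_hermitian))
qed

end
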